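(* Let $\mathcal{X}$ be a set, $D \ge 1$, $P\ge 1$ integers, and let $\bar f^1,\ldots,\bar f^P$ be mutually independent zero-mean Gaussian processes on $\mathcal{X}\times\mathbb{R}\times\{1,\ldots,D\}$, each of which satisfies: (i) there is a kernel $\kappa^p_{r}$ on $\mathcal{X}$ such that for each $\tau\in\mathbb{R}$, $\bar f^p(\cdot,\tau,\cdot)\sim\mathcal{GP}(0,\kappa^p_r(r,r')\alpha^p_\tau(d,d'))$ for some kernel $\alpha^p_\tau$ on $\{1,\ldots,D\}$; (ii) for all $\tau,\tau'$, $\bar f^p(\cdot,\tau',\cdot)=\mathcal{A}^p_{\tau\to\tau'}\bar f^p(\cdot,\tau,\cdot)+q^p_{\tau\to\tau'}$ with $(\mathcal{A}^p_{\tau\to\tau'}g)(r,d)=\sum_{j=1}^D[\mathbf{A}^p_{\tau\to\tau'}]_{dj}g(r,j)$ for a real $D\times D$ matrix $\mathbf{A}^p_{\tau\to\tau'}$ and $q^p_{\tau\to\tau'}$ a Gaussian process independent of $\bar f^p(\cdot,\tau,\cdot)$; and such that the kernel of $\bar f^p$ and $\kappa^p_r$ are non-degenerate. Let $\bar f^s:=\sum_{p=1}^P\bar f^p$. Let $\mathcal{T}\subset\mathbb{R}$ be finite and, for each $p$, let $\mathcal{Z}^p_r\subset\mathcal{X}$ be finite. Define $\bar{\mathbf{u}}^p:=\{\bar f^p(r,\tau,d)\mid r\in\mathcal{Z}^p_r,\tau\in\mathcal{T},d\in\{1,\ldots,D\}\}$, $\mathbf{u}^p_\tau:=\{\bar f^p(r,\tau,1)\mid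 r\in\mathcal{Z}^p_r\}$, $\bar{\mathbf{u}}:=\bigcup_{p=1}^P\bar{\mathbf{u}}^p$ and $\mathbf{u}_\tau:=\bigcup_{p=1}^P\mathbf{u}^p_\tau$. For $\tau\in\mathcal{T}$ let $\mathcal{X}_\tau\subset\mathcal{X}$ be finite and $\mathbf{f}^s_\tau:=\{\bar f^s(r,\tau,1)\mid r\in\mathcal{X}_\tau\}$. Then for each $\tau\in\mathcal{T}$, $\mathbf{f}^s_\tau$ is conditionally independent of $\bar{\mathbf{u}}\setminus\mathbf{u}_\tau$ given $\mathbf{u}_\tau$.
   Context: A kernel is non-degenerate if all covariance matrices it produces on finite sets of distinct points are invertible. Each $\bar f^p$ is the state-space augmentation of a space–time separable GP; $\bar f^s$ is then (the augmentation of) a sum-separable GP, i.e. a sum of independent separable GPs. *)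

theory Defs
  imports "HOL-Probability.Probability" "Jordan_Normal_Form.Matrix"
begin

definition gaussian_rv :: "'w measure \<Rightarrow> ('w \<Rightarrow> real) \<Rightarrow> bool" where
  "gaussian_rv M X \<longleftrightarrow> X \<in> borel_measurable M \<and>
     ((\<exists>\<mu>. distr M borel X = return borel \<mu>) \<or>
      (\<exists>\<mu> \<sigma>. \<sigma> > 0 \<and> distributed M lborel X (normal_density \<mu> \<sigma>)))"

definition jointly_gaussian :: "'w measure \<Rightarrow> 'i set \<Rightarrow> ('i \<Rightarrow> 'w \<Rightarrow> real) \<Rightarrow> bool" where
  "jointly_gaussian M I X \<longleftrightarrow> (\<forall>i\<in>I. X i \<in> borel_measurable M) \<and>
     (\<forall>J c. finite J \<and> J \<subseteq> I \<longrightarrow> gaussian_rv M (\<lambda>\<omega>. \<Sum>j\<in>J. c j * X j \<omega>))"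

definition zero_mean_GP :: "'w measure \<Rightarrow> 'i set \<Rightarrow> ('i \<Rightarrow> 'w \<Rightarrow> real) \<Rightarrow> ('i \<Rightarrow> 'i \<Rightarrow> real) \<Rightarrow> bool" where
  "zero_mean_GP M I X k \<longleftrightarrow> jointly_gaussian M I X \<and>
     (\<forall>i\<in>I. integral\<^sup>L M (X i) = 0) \<and>
     (\<forall>i\<in>I. \<forall>j\<in>I. integral\<^sup>L M (\<lambda>\<omega>. X i \<omega> * X j \<omega>) = k i j)"

definition cov_kernel :: "'w measure \<Rightarrow> ('i \<Rightarrow> 'w \<Rightarrow> real) \<Rightarrow> 'i \<Rightarrow> 'i \<Rightarrow> real" where
  "cov_kernel M X i j = integral\<^sup>L M (\<lambda>\<omega>. X i \<omega> * X j \<omega>)"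

definition is_kernel :: "'a set \<Rightarrow> ('a \<Rightarrow> 'a \<Rightarrow> real) \<Rightarrow> bool" where
  "is_kernel S k \<longleftrightarrow> (\<forall>x\<in>S. \<forall>y\<in>S. k x y = k y x) \<and>
     (\<forall>J c. finite J \<and> J \<subseteq> S \<longrightarrow> 0 \<le> (\<Sum>i\<in>J. \<Sum>j\<in>J. c i * c j * k i j))"

definition nondegenerate_kernel :: "'a set \<Rightarrow> ('a \<Rightarrow> 'a \<Rightarrow> real) \<Rightarrow> bool" where
  "nondegenerate_kernel S k \<longleftrightarrow> (\<forall>xs. distinct xs \<and> set xs \<subseteq> S \<longrightarrow>
     invertible_mat (mat (length xs) (length xs) (\<lambda>(i, j). k (xs ! i) (xs ! j))))"

definition gen_sigma :: "'w measure \<Rightarrow> 'i set \<Rightarrow> ('i \<Rightarrow> 'w \<Rightarrow> real) \<Rightarrow> 'w measure" where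
  "gen_sigma M J X = vimage_algebra (space M) (\<lambda>\<omega>. restrict (\<lambda>j. X j \<omega>) J) (PiM J (\<lambda>_. borel))"

definition cond_indep :: "'w measure \<Rightarrow> 'w measure \<Rightarrow> 'w measure \<Rightarrow> 'w measure \<Rightarrow> bool" where
  "cond_indep M F G H \<longleftrightarrow> (\<forall>A\<in>sets F. \<forall>B\<in>sets G. AE \<omega> in M.
      real_cond_exp M H (indicator (A \<inter> B)) \<omega> =
      real_cond_exp M H (indicator A) \<omega> * real_cond_exp M H (indicator B) \<omega>)"

end

theory Submission
  imports Defs
begin

text \<open>Since \<kappa>^p is non-degenerate, for every r there are kriging weights w^p_r on Z^p
  with \<Sum>_z' w^p_r(z') \<kappa>^p(z', z) = \<kappa>^p(r, z) for all z \<in> Z^p. By separability of the covariance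
  at time \<tau>, the residual \<epsilon>^p_r = f^p(r, \<tau>, 1) - \<Sum>_z w^p_r(z) f^p(z, \<tau>, 1) is uncorrelated
  with every f^p(z, \<tau>, d); by the transition equation, whose innovation is independent of the
  slice at \<tau>, it is also uncorrelated with every f^p(z, \<tau>', d). The processes are centred,
  jointly Gaussian and independent across p, so the residuals \<Sum>_p \<epsilon>^p_r are jointly independent
  of all inducing values. Hence f^s(r, \<tau>, 1) = \<Sum>_p \<epsilon>^p_r + \<Sum>_p \<Sum>_z w^p_r(z) f^p(z, \<tau>, 1) is a
  function of noise independent of the inducing values and of the inducing values at \<tau> alone,
  which gives the conditional independence.

  Independence is established through characteristic functions, using a multivariate uniqueness
  theorem derived from the one-dimensional one by induction on the dimension.\<close>

section \<open>Characteristic functions determine finite-dimensional laws\<close>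

lemma integral_scaleR_iexp:
  fixes W g :: "'a \<Rightarrow> real"
  assumes "finite_measure \<mu>" and [measurable]: "W \<in> borel_measurable \<mu>" "g \<in> borel_measurable \<mu>"
    and bounded: "\<And>x. \<bar>g x\<bar> \<le> c"
  shows "(CLINT x|\<mu>. g x *\<^sub>R iexp (s * W x)) =
    Complex (\<integral>x. g x * cos (s * W x) \<partial>\<mu>) (\<integral>x. g x * sin (s * W x) \<partial>\<mu>)"
proof -
  interpret finite_measure \<mu> by fact
  have "integrable \<mu> (\<lambda>x. g x *\<^sub>R iexp (s * W x))"
    by (rule integrable_const_bound[where B=c]) (auto simp: norm_mult bounded)
  then show ?thesis
    by (intro complex_eqI) (simp_all flip: integral_Re integral_Im add: Re_exp Im_exp mult.commute)
qed

lemma integral_cos_sin_eq_char: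
  fixes X :: "'a \<Rightarrow> real"
  assumes "finite_measure \<mu>" "X \<in> borel_measurable \<mu>"
  shows "(\<integral>x. cos (X x) \<partial>\<mu>) = Re (CLINT x|\<mu>. iexp (X x))"
    and "(\<integral>x. sin (X x) \<partial>\<mu>) = Im (CLINT x|\<mu>. iexp (X x))"
  using integral_scaleR_iexp[OF assms, of "\<lambda>_. 1" 1 1] by simp_all

text \<open>Levy's uniqueness theorem, extended from probability measures to finite measures by
  normalising the total mass, which is the value of the characteristic function at \<open>0\<close>.\<close>
lemma finite_borel_measure_eq_of_char_eq:
  fixes \<alpha> \<beta> :: "real measure"
  assumes "finite_measure \<alpha>" "finite_measure \<beta>"
    and sets: "sets \<alpha> = sets borel" "sets \<beta> = sets borel" and char_eq: "char \<alpha> = char \<beta>"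
  shows "\<alpha> = \<beta>"
proof -
  interpret \<alpha>: finite_measure \<alpha> by fact
  interpret \<beta>: finite_measure \<beta> by fact
  have space: "space \<alpha> = UNIV" "space \<beta> = UNIV"
    using sets_eq_imp_space_eq[OF sets(1)] sets_eq_imp_space_eq[OF sets(2)] by simp_all
  define m where "m = measure \<alpha> UNIV"
  have mass: "emeasure \<alpha> UNIV = ennreal m" "emeasure \<beta> UNIV = ennreal m"
    using fun_cong[OF char_eq, of 0] space
    by (simp_all add: m_def char_def \<alpha>.emeasure_eq_measure \<beta>.emeasure_eq_measure)
  show ?thesis
  proof (rule measure_eqI)
    fix A assume A: "A \<in> sets \<alpha>"
    show "emeasure \<alpha> A = emeasure \<beta> A"
    proof (cases "m = 0")
      case True
      have "emeasure \<alpha> A \<le> emeasure \<alpha> UNIV" "emeasure \<beta> A \<le> emeasure \<beta> UNIV"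
        using A sets by (intro emeasure_mono; simp)+
      then show ?thesis using True mass by simp
    next
      case False
      moreover have "m \<ge> 0" unfolding m_def by (rule measure_nonneg)
      ultimately have "m > 0" by simp
      define \<alpha>' where "\<alpha>' = density \<alpha> (\<lambda>_. ennreal (1 / m))"
      define \<beta>' where "\<beta>' = density \<beta> (\<lambda>_. ennreal (1 / m))"
      have emeasure': "emeasure \<alpha>' B = ennreal (1 / m) * emeasure \<alpha> B"
        "emeasure \<beta>' B = ennreal (1 / m) * emeasure \<beta> B" if "B \<in> sets borel" for B
        unfolding \<alpha>'_def \<beta>'_def using that sets
        by (subst emeasure_density; simp add: nn_integral_cmult)+
      have "real_distribution \<alpha>'" "real_distribution \<beta>'"
        unfolding real_distribution_def real_distribution_axioms_def
        using emeasure'[of UNIV] mass \<open>m > 0\<close> sets space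
        by (auto intro!: prob_spaceI simp: \<alpha>'_def \<beta>'_def ennreal_mult[symmetric])
      moreover have "char \<alpha>' = char \<beta>'"
        using char_eq \<open>m > 0\<close> sets
        by (auto simp: fun_eq_iff char_def \<alpha>'_def \<beta>'_def integral_density)
      ultimately have "\<alpha>' = \<beta>'" by (rule Levy_uniqueness)
      then have "ennreal m * emeasure \<alpha>' A = ennreal m * emeasure \<beta>' A" by simp
      then show ?thesis
        using A sets \<open>m > 0\<close>
        by (simp add: emeasure' mult.assoc[symmetric] ennreal_mult[symmetric])
    qed
  qed (simp add: sets)
qed

lemma emeasure_distr_density_bounded:
  fixes W g :: "'a \<Rightarrow> real"
  assumes "finite_measure \<mu>" and [measurable]: "W \<in> borel_measurable \<mu>" "g \<in> borel_measurable \<mu>"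
    and bounded: "\<And>x. 0 \<le> g x \<and> g x \<le> c" and [measurable]: "A \<in> sets borel"
  shows "emeasure (distr (density \<mu> g) borel W) A = ennreal (\<integral>x. g x * indicator A (W x) \<partial>\<mu>)"
proof -
  interpret finite_measure \<mu> by fact
  have "0 \<le> c" using bounded[of undefined] by linarith
  have "emeasure (distr (density \<mu> g) borel W) A = (\<integral>\<^sup>+x. ennreal (g x * indicator A (W x)) \<partial>\<mu>)"
    by (simp add: emeasure_distr emeasure_density) (intro nn_integral_cong, auto split: split_indicator)
  also have "\<dots> = ennreal (\<integral>x. g x * indicator A (W x) \<partial>\<mu>)"
    by (rule nn_integral_eq_integral)
      (use \<open>0 \<le> c\<close> in \<open>auto intro!: integrable_const_bound[where B=c] simp: bounded split: split_indicator\<close>)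
  finally show ?thesis .
qed

lemma integral_weighted_indicator_eq_of_char_eq_nonneg:
  fixes W :: "'a \<Rightarrow> real" and W' :: "'b \<Rightarrow> real"
  assumes fm: "finite_measure \<mu>" "finite_measure \<nu>"
    and [measurable]: "W \<in> borel_measurable \<mu>" "W' \<in> borel_measurable \<nu>"
      "g \<in> borel_measurable \<mu>" "g' \<in> borel_measurable \<nu>"
    and bounded: "\<And>x. 0 \<le> g x \<and> g x \<le> c" "\<And>x. 0 \<le> g' x \<and> g' x \<le> c"
    and char_eq: "\<And>s. (CLINT x|\<mu>. g x *\<^sub>R iexp (s * W x)) = (CLINT x|\<nu>. g' x *\<^sub>R iexp (s * W' x))"
    and B[measurable]: "B \<in> sets borel"
  shows "(\<integral>x. g x * indicator B (W x) \<partial>\<mu>) = (\<integral>x. g' x * indicator B (W' x) \<partial>\<nu>)"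
proof -
  note emeasure_\<alpha> = emeasure_distr_density_bounded[OF fm(1), of W g c, OF _ _ bounded(1)]
  note emeasure_\<beta> = emeasure_distr_density_bounded[OF fm(2), of W' g' c, OF _ _ bounded(2)]
  have "distr (density \<mu> g) borel W = distr (density \<nu> g') borel W'"
  proof (rule finite_borel_measure_eq_of_char_eq)
    show "finite_measure (distr (density \<mu> g) borel W)" "finite_measure (distr (density \<nu> g') borel W')"
      using emeasure_\<alpha>[of UNIV] emeasure_\<beta>[of UNIV] by (auto intro!: finite_measureI)
    show "char (distr (density \<mu> g) borel W) = char (distr (density \<nu> g') borel W')"
      using char_eq bounded by (simp add: fun_eq_iff char_def integral_distr integral_density)
  qed simp_all
  then have "ennreal (\<integral>x. g x * indicator B (W x) \<partial>\<mu>) = ennreal (\<integral>x. g' x * indicator B (W' x) \<partial>\<nu>)"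
    using emeasure_\<alpha>[OF _ _ B] emeasure_\<beta>[OF _ _ B] by simp
  moreover have "0 \<le> (\<integral>x. g x * indicator B (W x) \<partial>\<mu>)" "0 \<le> (\<integral>x. g' x * indicator B (W' x) \<partial>\<nu>)"
    by (rule Bochner_Integration.integral_nonneg, simp add: bounded)+
  ultimately show ?thesis by simp
qed

lemma integral_weighted_indicator_eq_of_char_eq:
  fixes W :: "'a \<Rightarrow> real" and W' :: "'b \<Rightarrow> real"
  assumes fm: "finite_measure \<mu>" "finite_measure \<nu>"
    and [measurable]: "W \<in> borel_measurable \<mu>" "W' \<in> borel_measurable \<nu>"
      "g \<in> borel_measurable \<mu>" "g' \<in> borel_measurable \<nu>"
    and bounded: "\<And>x. \<bar>g x\<bar> \<le> 1" "\<And>x. \<bar>g' x\<bar> \<le> 1"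
    and char_eq: "\<And>s. (CLINT x|\<mu>. iexp (s * W x)) = (CLINT x|\<nu>. iexp (s * W' x))"
    and weighted_char_eq:
      "\<And>s. (CLINT x|\<mu>. g x *\<^sub>R iexp (s * W x)) = (CLINT x|\<nu>. g' x *\<^sub>R iexp (s * W' x))"
    and B[measurable]: "B \<in> sets borel"
  shows "(\<integral>x. g x * indicator B (W x) \<partial>\<mu>) = (\<integral>x. g' x * indicator B (W' x) \<partial>\<nu>)"
proof -
  interpret m1: finite_measure \<mu> by fact
  interpret m2: finite_measure \<nu> by fact
  have bounds: "0 \<le> 1 + g x \<and> 1 + g x \<le> 2" "0 \<le> 1 + g' y \<and> 1 + g' y \<le> 2" for x y
    using bounded(1)[of x] bounded(2)[of y] by (simp_all add: abs_le_iff)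
  have ints:
    "complex_integrable \<mu> (\<lambda>x. iexp (s * W x))" "complex_integrable \<nu> (\<lambda>x. iexp (s * W' x))"
    "complex_integrable \<mu> (\<lambda>x. g x *\<^sub>R iexp (s * W x))" "complex_integrable \<nu> (\<lambda>x. g' x *\<^sub>R iexp (s * W' x))"
    "integrable \<mu> (\<lambda>x. indicator B (W x) :: real)" "integrable \<nu> (\<lambda>x. indicator B (W' x) :: real)"
    "integrable \<mu> (\<lambda>x. g x * indicator B (W x))" "integrable \<nu> (\<lambda>x. g' x * indicator B (W' x))" for s
    by (auto intro!: m1.integrable_const_bound[where B=1] m2.integrable_const_bound[where B=1]
        simp: bounded abs_mult split: split_indicator)
  have "(\<integral>x. 1 * indicator B (W x) \<partial>\<mu>) = (\<integral>x. (1::real) * indicator B (W' x) \<partial>\<nu>)"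
    by (rule integral_weighted_indicator_eq_of_char_eq_nonneg[OF fm, where c=1]) (use char_eq in auto)
  moreover have "(\<integral>x. (1 + g x) * indicator B (W x) \<partial>\<mu>) = (\<integral>x. (1 + g' x) * indicator B (W' x) \<partial>\<nu>)"
  proof (rule integral_weighted_indicator_eq_of_char_eq_nonneg[OF fm, where c=2])
    fix s
    show "(CLINT x|\<mu>. (1 + g x) *\<^sub>R iexp (s * W x)) = (CLINT x|\<nu>. (1 + g' x) *\<^sub>R iexp (s * W' x))"
      using char_eq[of s] weighted_char_eq[of s] ints
      by (simp add: scaleR_add_left Bochner_Integration.integral_add)
  qed (use bounds in auto)
  ultimately show ?thesis
    using ints by (simp add: distrib_right Bochner_Integration.integral_add)
qed

lemma integral_trig_products:
  fixes \<theta> V :: "'a \<Rightarrow> real"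
  assumes "finite_measure \<mu>" and [measurable]: "\<theta> \<in> borel_measurable \<mu>" "V \<in> borel_measurable \<mu>"
  shows "(\<integral>x. cos (\<theta> x) * cos (V x) \<partial>\<mu>) = ((\<integral>x. cos (\<theta> x + V x) \<partial>\<mu>) + (\<integral>x. cos (\<theta> x + - V x) \<partial>\<mu>)) / 2"
    and "(\<integral>x. sin (\<theta> x) * sin (V x) \<partial>\<mu>) = ((\<integral>x. cos (\<theta> x + - V x) \<partial>\<mu>) - (\<integral>x. cos (\<theta> x + V x) \<partial>\<mu>)) / 2"
    and "(\<integral>x. sin (\<theta> x) * cos (V x) \<partial>\<mu>) = ((\<integral>x. sin (\<theta> x + V x) \<partial>\<mu>) + (\<integral>x. sin (\<theta> x + - V x) \<partial>\<mu>)) / 2"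
    and "(\<integral>x. cos (\<theta> x) * sin (V x) \<partial>\<mu>) = ((\<integral>x. sin (\<theta> x + V x) \<partial>\<mu>) - (\<integral>x. sin (\<theta> x + - V x) \<partial>\<mu>)) / 2"
proof -
  interpret finite_measure \<mu> by fact
  have ints: "integrable \<mu> (\<lambda>x. cos (\<theta> x + c * V x))" "integrable \<mu> (\<lambda>x. sin (\<theta> x + c * V x))" for c
    by (rule integrable_const_bound[where B=1], simp_all add: abs_cos_le_one abs_sin_le_one)+
  have cos_ints: "integrable \<mu> (\<lambda>x. cos (\<theta> x + V x))" "integrable \<mu> (\<lambda>x. cos (\<theta> x + - V x))"
    and sin_ints: "integrable \<mu> (\<lambda>x. sin (\<theta> x + V x))" "integrable \<mu> (\<lambda>x. sin (\<theta> x + - V x))"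
    using ints[of 1] ints[of "-1"] by simp_all
  show "(\<integral>x. cos (\<theta> x) * cos (V x) \<partial>\<mu>) = ((\<integral>x. cos (\<theta> x + V x) \<partial>\<mu>) + (\<integral>x. cos (\<theta> x + - V x) \<partial>\<mu>)) / 2"
    by (subst Bochner_Integration.integral_add[OF cos_ints, symmetric], subst integral_divide_zero[symmetric])
       (simp add: cos_add cos_diff mult.commute)
  show "(\<integral>x. sin (\<theta> x) * sin (V x) \<partial>\<mu>) = ((\<integral>x. cos (\<theta> x + - V x) \<partial>\<mu>) - (\<integral>x. cos (\<theta> x + V x) \<partial>\<mu>)) / 2"
    by (subst Bochner_Integration.integral_diff[OF cos_ints(2,1), symmetric], subst integral_divide_zero[symmetric])
       (simp add: cos_add cos_diff mult.commute)
  show "(\<integral>x. sin (\<theta> x) * cos (V x) \<partial>\<mu>) = ((\<integral>x. sin (\<theta> x + V x) \<partial>\<mu>) + (\<integral>x. sin (\<theta> x + - V x) \<partial>\<mu>)) / 2"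
    by (subst Bochner_Integration.integral_add[OF sin_ints, symmetric], subst integral_divide_zero[symmetric])
       (simp add: sin_add sin_diff mult.commute)
  show "(\<integral>x. cos (\<theta> x) * sin (V x) \<partial>\<mu>) = ((\<integral>x. sin (\<theta> x + V x) \<partial>\<mu>) - (\<integral>x. sin (\<theta> x + - V x) \<partial>\<mu>)) / 2"
    by (subst Bochner_Integration.integral_diff[OF sin_ints, symmetric], subst integral_divide_zero[symmetric])
       (simp add: sin_add sin_diff mult.commute)
qed

text \<open>By the product-to-sum formulas, the Fourier transform of \<open>W\<close> weighted by \<open>cos \<theta>\<close> or
  \<open>sin \<theta>\<close> is a combination of trigonometric moments of \<open>\<theta> \<plusminus> s W\<close>.\<close>
lemma integral_trig_indicator_eq:
  fixes \<theta> W :: "'a \<Rightarrow> real" and \<theta>' W' :: "'b \<Rightarrow> real"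
  assumes fm: "finite_measure \<mu>" "finite_measure \<nu>"
    and [measurable]: "\<theta> \<in> borel_measurable \<mu>" "W \<in> borel_measurable \<mu>"
      "\<theta>' \<in> borel_measurable \<nu>" "W' \<in> borel_measurable \<nu>"
    and cos_eq: "\<And>s. (\<integral>x. cos (\<theta> x + s * W x) \<partial>\<mu>) = (\<integral>x. cos (\<theta>' x + s * W' x) \<partial>\<nu>)"
    and sin_eq: "\<And>s. (\<integral>x. sin (\<theta> x + s * W x) \<partial>\<mu>) = (\<integral>x. sin (\<theta>' x + s * W' x) \<partial>\<nu>)"
    and char_eq: "\<And>s. (CLINT x|\<mu>. iexp (s * W x)) = (CLINT x|\<nu>. iexp (s * W' x))"
    and B[measurable]: "B \<in> sets borel"
  shows "(\<integral>x. cos (\<theta> x) * indicator B (W x) \<partial>\<mu>) = (\<integral>x. cos (\<theta>' x) * indicator B (W' x) \<partial>\<nu>)"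
    and "(\<integral>x. sin (\<theta> x) * indicator B (W x) \<partial>\<mu>) = (\<integral>x. sin (\<theta>' x) * indicator B (W' x) \<partial>\<nu>)"
proof -
  have "(CLINT x|\<mu>. cos (\<theta> x) *\<^sub>R iexp (s * W x)) = (CLINT x|\<nu>. cos (\<theta>' x) *\<^sub>R iexp (s * W' x))"
    "(CLINT x|\<mu>. sin (\<theta> x) *\<^sub>R iexp (s * W x)) = (CLINT x|\<nu>. sin (\<theta>' x) *\<^sub>R iexp (s * W' x))" for s
    using integral_scaleR_iexp[OF fm(1), of W "\<lambda>x. cos (\<theta> x)" 1 s]
      integral_scaleR_iexp[OF fm(2), of W' "\<lambda>x. cos (\<theta>' x)" 1 s]
      integral_scaleR_iexp[OF fm(1), of W "\<lambda>x. sin (\<theta> x)" 1 s]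
      integral_scaleR_iexp[OF fm(2), of W' "\<lambda>x. sin (\<theta>' x)" 1 s]
      integral_trig_products[OF fm(1), of \<theta> "\<lambda>x. s * W x"]
      integral_trig_products[OF fm(2), of \<theta>' "\<lambda>x. s * W' x"] cos_eq[of s] cos_eq[of "-s"] sin_eq[of s] sin_eq[of "-s"]
    by (simp_all add: abs_cos_le_one abs_sin_le_one)
  then show "(\<integral>x. cos (\<theta> x) * indicator B (W x) \<partial>\<mu>) = (\<integral>x. cos (\<theta>' x) * indicator B (W' x) \<partial>\<nu>)"
    and "(\<integral>x. sin (\<theta> x) * indicator B (W x) \<partial>\<mu>) = (\<integral>x. sin (\<theta>' x) * indicator B (W' x) \<partial>\<nu>)"
    by (auto intro!: integral_weighted_indicator_eq_of_char_eq[OF fm] char_eq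
        simp: abs_cos_le_one abs_sin_le_one)
qed

lemma sum_insert_fun_upd:
  fixes x :: "'i \<Rightarrow> 'a::comm_semiring_1"
  assumes "finite I" "i \<notin> I"
  shows "(\<Sum>j\<in>insert i I. (t(i := s)) j * x j) = s * x i + (\<Sum>j\<in>I. t j * x j)"
proof -
  have "(\<Sum>j\<in>I. (t(i := s)) j * x j) = (\<Sum>j\<in>I. t j * x j)"
    using assms(2) by (intro sum.cong) auto
  then show ?thesis using assms by simp
qed

lemma integral_density_indicator:
  fixes f :: "'a \<Rightarrow> real"
  assumes [measurable]: "S \<in> sets \<mu>" "f \<in> borel_measurable \<mu>"
  shows "integral\<^sup>L (density \<mu> (indicator S)) f = (\<integral>x. f x * indicator S x \<partial>\<mu>)"
proof -
  have "integral\<^sup>L (density \<mu> (indicator S)) f = integral\<^sup>L (density \<mu> (\<lambda>x. ennreal (indicator S x))) f"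
    by (simp add: ennreal_indicator)
  also have "\<dots> = (\<integral>x. f x * indicator S x \<partial>\<mu>)"
    by (subst integral_density) (auto simp: mult.commute)
  finally show ?thesis .
qed

lemma trig_eq_restrict_to_event:
  fixes W :: "'i \<Rightarrow> 'a \<Rightarrow> real" and W' :: "'i \<Rightarrow> 'b \<Rightarrow> real"
  assumes I: "finite I" "i \<notin> I" and fm: "finite_measure \<mu>" "finite_measure \<nu>"
    and W: "\<And>j. j \<in> insert i I \<Longrightarrow> W j \<in> borel_measurable \<mu>"
    and W': "\<And>j. j \<in> insert i I \<Longrightarrow> W' j \<in> borel_measurable \<nu>"
    and cos_eq: "\<And>t. (\<integral>x. cos (\<Sum>j\<in>insert i I. t j * W j x) \<partial>\<mu>) = (\<integral>x. cos (\<Sum>j\<in>insert i I. t j * W' j x) \<partial>\<nu>)"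
    and sin_eq: "\<And>t. (\<integral>x. sin (\<Sum>j\<in>insert i I. t j * W j x) \<partial>\<mu>) = (\<integral>x. sin (\<Sum>j\<in>insert i I. t j * W' j x) \<partial>\<nu>)"
    and A[measurable]: "A \<in> sets borel"
  defines "S \<equiv> W i -` A \<inter> space \<mu>" and "S' \<equiv> W' i -` A \<inter> space \<nu>"
  shows "(\<integral>x. cos (\<Sum>j\<in>I. t j * W j x) \<partial>density \<mu> (indicator S)) =
      (\<integral>x. cos (\<Sum>j\<in>I. t j * W' j x) \<partial>density \<nu> (indicator S'))"
    and "(\<integral>x. sin (\<Sum>j\<in>I. t j * W j x) \<partial>density \<mu> (indicator S)) =
      (\<integral>x. sin (\<Sum>j\<in>I. t j * W' j x) \<partial>density \<nu> (indicator S'))"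
proof -
  have [measurable]: "W i \<in> borel_measurable \<mu>" "W' i \<in> borel_measurable \<nu>"
    "(\<lambda>x. \<Sum>j\<in>I. t j * W j x) \<in> borel_measurable \<mu>" "(\<lambda>x. \<Sum>j\<in>I. t j * W' j x) \<in> borel_measurable \<nu>"
    using W W' by (auto intro!: borel_measurable_sum borel_measurable_times)
  have [measurable]: "S \<in> sets \<mu>" "S' \<in> sets \<nu>" unfolding S_def S'_def by measurable
  have cos_eq': "(\<integral>x. cos (s * W i x + (\<Sum>j\<in>I. t' j * W j x)) \<partial>\<mu>) =
      (\<integral>x. cos (s * W' i x + (\<Sum>j\<in>I. t' j * W' j x)) \<partial>\<nu>)"
    and sin_eq': "(\<integral>x. sin (s * W i x + (\<Sum>j\<in>I. t' j * W j x)) \<partial>\<mu>) =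
      (\<integral>x. sin (s * W' i x + (\<Sum>j\<in>I. t' j * W' j x)) \<partial>\<nu>)" for s t'
    using cos_eq[of "t'(i := s)"] sin_eq[of "t'(i := s)"] unfolding sum_insert_fun_upd[OF I] .
  have char_eq: "(CLINT x|\<mu>. iexp (s * W i x)) = (CLINT x|\<nu>. iexp (s * W' i x))" for s
    using cos_eq'[of s "\<lambda>_. 0"] sin_eq'[of s "\<lambda>_. 0"]
      integral_cos_sin_eq_char[OF fm(1), of "\<lambda>x. s * W i x"]
      integral_cos_sin_eq_char[OF fm(2), of "\<lambda>x. s * W' i x"]
    by (intro complex_eqI) simp_all
  have "(\<integral>x. F x * indicator S x \<partial>\<mu>) = (\<integral>x. F x * indicator A (W i x) \<partial>\<mu>)"
    "(\<integral>x. G x * indicator S' x \<partial>\<nu>) = (\<integral>x. G x * indicator A (W' i x) \<partial>\<nu>)"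
    for F :: "'a \<Rightarrow> real" and G :: "'b \<Rightarrow> real"
    by (auto intro!: Bochner_Integration.integral_cong simp: S_def S'_def split: split_indicator)
  then show "(\<integral>x. cos (\<Sum>j\<in>I. t j * W j x) \<partial>density \<mu> (indicator S)) =
      (\<integral>x. cos (\<Sum>j\<in>I. t j * W' j x) \<partial>density \<nu> (indicator S'))"
    and "(\<integral>x. sin (\<Sum>j\<in>I. t j * W j x) \<partial>density \<mu> (indicator S)) =
      (\<integral>x. sin (\<Sum>j\<in>I. t j * W' j x) \<partial>density \<nu> (indicator S'))"
    using integral_trig_indicator_eq[OF fm, of "\<lambda>x. \<Sum>j\<in>I. t j * W j x" "W i"
        "\<lambda>x. \<Sum>j\<in>I. t j * W' j x" "W' i" A] cos_eq' sin_eq' char_eq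
    by (simp_all add: integral_density_indicator add.commute)
qed

text \<open>Induction on \<open>I\<close>: restricting both measures to the event \<open>W i \<in> A i\<close> removes the
  coordinate \<open>i\<close>.\<close>
lemma measure_box_eq_of_trig_eq:
  fixes W :: "'i \<Rightarrow> 'a \<Rightarrow> real" and W' :: "'i \<Rightarrow> 'b \<Rightarrow> real" and A :: "'i \<Rightarrow> real set"
  assumes "finite I" and "finite_measure \<mu>" "finite_measure \<nu>"
    and "\<And>j. j \<in> I \<Longrightarrow> W j \<in> borel_measurable \<mu>" "\<And>j. j \<in> I \<Longrightarrow> W' j \<in> borel_measurable \<nu>"
    and "\<And>t. (\<integral>x. cos (\<Sum>j\<in>I. t j * W j x) \<partial>\<mu>) = (\<integral>x. cos (\<Sum>j\<in>I. t j * W' j x) \<partial>\<nu>)"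
    and "\<And>t. (\<integral>x. sin (\<Sum>j\<in>I. t j * W j x) \<partial>\<mu>) = (\<integral>x. sin (\<Sum>j\<in>I. t j * W' j x) \<partial>\<nu>)"
    and "\<And>j. j \<in> I \<Longrightarrow> A j \<in> sets borel"
  shows "measure \<mu> {x\<in>space \<mu>. \<forall>j\<in>I. W j x \<in> A j} = measure \<nu> {x\<in>space \<nu>. \<forall>j\<in>I. W' j x \<in> A j}"
  using assms
proof (induction I arbitrary: \<mu> \<nu> rule: finite_induct)
  case empty
  then show ?case by simp
next
  case (insert i I)
  interpret m1: finite_measure \<mu> by fact
  interpret m2: finite_measure \<nu> by fact
  have [measurable]: "W i \<in> borel_measurable \<mu>" "W' i \<in> borel_measurable \<nu>" "A i \<in> sets borel"
    using insert.prems by auto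
  define S where "S = W i -` A i \<inter> space \<mu>"
  define S' where "S' = W' i -` A i \<inter> space \<nu>"
  have S[measurable]: "S \<in> sets \<mu>" "S' \<in> sets \<nu>" unfolding S_def S'_def by measurable
  have "measure (density \<mu> (indicator S)) {x\<in>space \<mu>. \<forall>j\<in>I. W j x \<in> A j} =
      measure (density \<nu> (indicator S')) {x\<in>space \<nu>. \<forall>j\<in>I. W' j x \<in> A j}"
    using insert.IH[of "density \<mu> (indicator S)" "density \<nu> (indicator S')"] insert.prems
      trig_eq_restrict_to_event[OF insert.hyps insert.prems(1-6), of "A i"]
    by (simp add: m1.finite_measure_restricted m2.finite_measure_restricted S_def S'_def)
  moreover have "{x\<in>space \<mu>. \<forall>j\<in>I. W j x \<in> A j} \<in> sets \<mu>" "{x\<in>space \<nu>. \<forall>j\<in>I. W' j x \<in> A j} \<in> sets \<nu>"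
    using insert.prems insert.hyps(1) by measurable
  ultimately have "measure \<mu> (S \<inter> {x\<in>space \<mu>. \<forall>j\<in>I. W j x \<in> A j}) =
      measure \<nu> (S' \<inter> {x\<in>space \<nu>. \<forall>j\<in>I. W' j x \<in> A j})"
    by (simp add: measure_restricted[OF S(1)] measure_restricted[OF S(2)])
  moreover have "S \<inter> {x\<in>space \<mu>. \<forall>j\<in>I. W j x \<in> A j} = {x\<in>space \<mu>. \<forall>j\<in>insert i I. W j x \<in> A j}"
    "S' \<inter> {x\<in>space \<nu>. \<forall>j\<in>I. W' j x \<in> A j} = {x\<in>space \<nu>. \<forall>j\<in>insert i I. W' j x \<in> A j}"
    by (auto simp: S_def S'_def)
  ultimately show ?case by simp
qed

lemma distr_restrict_eq_of_char_eq:
  fixes V :: "'i \<Rightarrow> 'a \<Rightarrow> real" and V' :: "'i \<Rightarrow> 'b \<Rightarrow> real"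
  assumes fin: "finite K" and fm: "finite_measure \<mu>" "finite_measure \<nu>"
    and V: "\<And>k. k \<in> K \<Longrightarrow> V k \<in> borel_measurable \<mu>"
    and V': "\<And>k. k \<in> K \<Longrightarrow> V' k \<in> borel_measurable \<nu>"
    and char_eq: "\<And>t. (CLINT x|\<mu>. iexp (\<Sum>k\<in>K. t k * V k x)) = (CLINT x|\<nu>. iexp (\<Sum>k\<in>K. t k * V' k x))"
  shows "distr \<mu> (PiM K (\<lambda>_. borel)) (\<lambda>x. restrict (\<lambda>k. V k x) K) =
    distr \<nu> (PiM K (\<lambda>_. borel)) (\<lambda>x. restrict (\<lambda>k. V' k x) K)"
proof -
  interpret m1: finite_measure \<mu> by fact
  interpret m2: finite_measure \<nu> by fact
  have [measurable]: "(\<lambda>x. restrict (\<lambda>k. V k x) K) \<in> measurable \<mu> (PiM K (\<lambda>_. borel))"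
    "(\<lambda>x. restrict (\<lambda>k. V' k x) K) \<in> measurable \<nu> (PiM K (\<lambda>_. borel))"
    using V V' by (auto intro!: measurable_restrict)
  have trig_eq: "(\<integral>x. cos (\<Sum>k\<in>K. t k * V k x) \<partial>\<mu>) = (\<integral>x. cos (\<Sum>k\<in>K. t k * V' k x) \<partial>\<nu>)"
    "(\<integral>x. sin (\<Sum>k\<in>K. t k * V k x) \<partial>\<mu>) = (\<integral>x. sin (\<Sum>k\<in>K. t k * V' k x) \<partial>\<nu>)" for t
    using integral_cos_sin_eq_char[OF fm(1), of "\<lambda>x. \<Sum>k\<in>K. t k * V k x"]
      integral_cos_sin_eq_char[OF fm(2), of "\<lambda>x. \<Sum>k\<in>K. t k * V' k x"] char_eq[of t] V V'
    by (auto intro!: borel_measurable_sum borel_measurable_times)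
  show ?thesis
  proof (rule measure_eqI_PiM_finite[OF fin])
    fix A :: "'i \<Rightarrow> real set" assume A: "\<And>i. i \<in> K \<Longrightarrow> A i \<in> sets borel"
    have "Pi\<^sub>E K A \<in> sets (PiM K (\<lambda>_. borel))"
      using A by (intro sets_PiM_I_finite fin) auto
    moreover have "(\<lambda>x. restrict (\<lambda>k. V k x) K) -` Pi\<^sub>E K A \<inter> space \<mu> = {x\<in>space \<mu>. \<forall>k\<in>K. V k x \<in> A k}"
      "(\<lambda>x. restrict (\<lambda>k. V' k x) K) -` Pi\<^sub>E K A \<inter> space \<nu> = {x\<in>space \<nu>. \<forall>k\<in>K. V' k x \<in> A k}"
      by auto
    ultimately show "emeasure (distr \<mu> (PiM K (\<lambda>_. borel)) (\<lambda>x. restrict (\<lambda>k. V k x) K)) (Pi\<^sub>E K A) =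
        emeasure (distr \<nu> (PiM K (\<lambda>_. borel)) (\<lambda>x. restrict (\<lambda>k. V' k x) K)) (Pi\<^sub>E K A)"
      using measure_box_eq_of_trig_eq[OF fin fm V V' trig_eq A]
      by (simp add: emeasure_distr m1.emeasure_eq_measure m2.emeasure_eq_measure)
  next
    show "range (\<lambda>_::nat. space (PiM K (\<lambda>_. borel))) \<subseteq> prod_algebra K (\<lambda>_. borel)"
      using space_in_prod_algebra[of K "\<lambda>_. borel"] by (auto simp: space_PiM)
    show "emeasure (distr \<mu> (PiM K (\<lambda>_. borel)) (\<lambda>x. restrict (\<lambda>k. V k x) K)) (space (PiM K (\<lambda>_. borel))) \<noteq> \<infinity>"
      by (simp add: emeasure_distr)
  qed simp_all
qed

section \<open>Independence and conditional independence\<close>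

lemma (in prob_space) pair_measure_distr_self:
  assumes X: "X \<in> measurable M S" and Y: "Y \<in> measurable M T"
  shows "distr M S X \<Otimes>\<^sub>M distr M T Y = distr (M \<Otimes>\<^sub>M M) (S \<Otimes>\<^sub>M T) (\<lambda>\<omega>. (X (fst \<omega>), Y (snd \<omega>)))"
proof -
  have "sigma_finite_measure (distr M T Y)"
    using prob_space_distr[OF Y] by (simp add: prob_space_imp_sigma_finite)
  then show ?thesis
    using pair_measure_distr[OF X Y] by (simp add: case_prod_beta')
qed

lemma (in prob_space) integral_indep_eq_iterated:
  fixes \<phi> :: "'b \<times> 'c \<Rightarrow> real"
  assumes X[measurable]: "X \<in> measurable M N1" and Y[measurable]: "Y \<in> measurable M N2"
    and indep: "distr M (N1 \<Otimes>\<^sub>M N2) (\<lambda>\<omega>. (X \<omega>, Y \<omega>)) = distr M N1 X \<Otimes>\<^sub>M distr M N2 Y"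
    and [measurable]: "\<phi> \<in> borel_measurable (N1 \<Otimes>\<^sub>M N2)"
    and bounded: "\<And>z. \<bar>\<phi> z\<bar> \<le> c"
  shows "(\<integral>\<omega>. \<phi> (X \<omega>, Y \<omega>) \<partial>M) = (\<integral>\<omega>. (\<integral>\<omega>'. \<phi> (X \<omega>', Y \<omega>) \<partial>M) \<partial>M)"
proof -
  have "(\<integral>\<omega>. \<phi> (X \<omega>, Y \<omega>) \<partial>M) = integral\<^sup>L (distr M (N1 \<Otimes>\<^sub>M N2) (\<lambda>\<omega>. (X \<omega>, Y \<omega>))) \<phi>"
    by (simp add: integral_distr)
  also have "\<dots> = integral\<^sup>L (distr (M \<Otimes>\<^sub>M M) (N1 \<Otimes>\<^sub>M N2) (\<lambda>\<omega>. (X (fst \<omega>), Y (snd \<omega>)))) \<phi>"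
    unfolding indep pair_measure_distr_self[OF X Y] ..
  also have "\<dots> = (\<integral>\<omega>. \<phi> (X (fst \<omega>), Y (snd \<omega>)) \<partial>(M \<Otimes>\<^sub>M M))"
    by (simp add: integral_distr)
  also have "\<dots> = (\<integral>\<omega>. (\<integral>\<omega>'. \<phi> (X \<omega>', Y \<omega>) \<partial>M) \<partial>M)"
  proof -
    interpret pair_prob_space M M by unfold_locales
    have "integrable (M \<Otimes>\<^sub>M M) (\<lambda>(\<omega>', \<omega>). \<phi> (X \<omega>', Y \<omega>))"
      by (rule P.integrable_const_bound[where B=c]) (auto simp: bounded case_prod_beta')
    from integral_snd[OF this] show ?thesis by (simp add: case_prod_beta')
  qed
  finally show ?thesis .
qed

text \<open>\<open>\<phi>\<close> is a version of \<open>P(A | F)\<close> that remains one after restricting to \<open>B\<close>.\<close>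
lemma (in prob_space) cond_indep_indicator_of_integral_eq:
  fixes \<phi> :: "'a \<Rightarrow> real"
  assumes F: "subalgebra M F"
    and [measurable]: "A \<in> sets M" "B \<in> sets M" and \<phi>: "\<phi> \<in> borel_measurable F"
    and bounded: "\<And>x. x \<in> space M \<Longrightarrow> \<bar>\<phi> x\<bar> \<le> 1"
    and A_eq: "\<And>C. C \<in> sets F \<Longrightarrow> (\<integral>x. indicator (A \<inter> C) x \<partial>M) = (\<integral>x. \<phi> x * indicator C x \<partial>M)"
    and AB_eq: "\<And>C. C \<in> sets F \<Longrightarrow>
      (\<integral>x. indicator (A \<inter> B \<inter> C) x \<partial>M) = (\<integral>x. \<phi> x * indicator (B \<inter> C) x \<partial>M)"
  shows "AE x in M. real_cond_exp M F (indicator (A \<inter> B)) x =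
    real_cond_exp M F (indicator A) x * real_cond_exp M F (indicator B) x"
proof -
  interpret sigma_finite_subalgebra M F
    by (rule finite_measure_subalgebra_is_sigma_finite) (unfold_locales, rule F)
  have [measurable]: "\<phi> \<in> borel_measurable F" "\<phi> \<in> borel_measurable M"
    using measurable_from_subalg[OF F \<phi>] \<phi> by auto
  have C_M: "C \<in> sets F \<Longrightarrow> C \<in> sets M" for C using F by (auto simp: subalgebra_def)
  have set_integral: "(\<integral>x\<in>C. f x \<partial>M) = (\<integral>x. f x * indicator C x \<partial>M)" for C and f :: "'a \<Rightarrow> real"
    by (simp add: set_lebesgue_integral_def mult.commute)
  have bounded_integrable: "integrable M f" if "f \<in> borel_measurable M" "\<And>x. x \<in> space M \<Longrightarrow> \<bar>f x\<bar> \<le> 1"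
    for f :: "'a \<Rightarrow> real"
    using that by (intro integrable_const_bound[where B=1]) auto
  have "AE x in M. real_cond_exp M F (indicator A) x = \<phi> x"
  proof (rule real_cond_exp_charact)
    fix C assume "C \<in> sets F"
    then show "(\<integral>x\<in>C. indicator A x \<partial>M) = (\<integral>x\<in>C. \<phi> x \<partial>M)"
      using A_eq[of C] by (simp add: set_integral indicator_inter_arith)
  qed (auto intro!: bounded_integrable bounded simp: abs_le_iff split: split_indicator)
  moreover have "AE x in M. real_cond_exp M F (indicator (A \<inter> B)) x = \<phi> x * real_cond_exp M F (indicator B) x"
  proof (rule real_cond_exp_charact)
    fix C assume C: "C \<in> sets F"
    have [measurable]: "C \<in> sets M" using C_M[OF C] .
    have "(\<integral>x\<in>C. indicator (A \<inter> B) x \<partial>M) = (\<integral>x. (indicator C x * \<phi> x) * indicator B x \<partial>M)"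
      using AB_eq[OF C] by (simp add: set_integral indicator_inter_arith mult_ac)
    also have "\<dots> = (\<integral>x. (indicator C x * \<phi> x) * real_cond_exp M F (indicator B) x \<partial>M)"
      using C by (intro real_cond_exp_intg(2)[symmetric] bounded_integrable)
        (auto simp: abs_mult bounded split: split_indicator)
    finally show "(\<integral>x\<in>C. indicator (A \<inter> B) x \<partial>M) = (\<integral>x\<in>C. \<phi> x * real_cond_exp M F (indicator B) x \<partial>M)"
      by (simp add: set_integral mult_ac)
  next
    show "integrable M (\<lambda>x. \<phi> x * real_cond_exp M F (indicator B) x)"
      by (intro real_cond_exp_intg(1) bounded_integrable) (auto simp: abs_mult bounded split: split_indicator)
  qed (auto intro!: bounded_integrable)
  ultimately show ?thesis by eventually_elim simp
qed

lemma (in prob_space) integral_indicator_indep_noise: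
  assumes E[measurable]: "E \<in> measurable M N1" and W[measurable]: "W \<in> measurable M N2"
    and indep: "distr M (N1 \<Otimes>\<^sub>M N2) (\<lambda>\<omega>. (E \<omega>, W \<omega>)) = distr M N1 E \<Otimes>\<^sub>M distr M N2 W"
    and [measurable]: "\<Psi> \<in> measurable (N1 \<Otimes>\<^sub>M N2) N" "Q \<in> sets N" "R \<in> sets N2"
  shows "(\<integral>\<omega>. indicator Q (\<Psi> (E \<omega>, W \<omega>)) * indicator R (W \<omega>) \<partial>M) =
    (\<integral>\<omega>. (\<integral>\<omega>'. indicator Q (\<Psi> (E \<omega>', W \<omega>)) \<partial>M) * indicator R (W \<omega>) \<partial>M :: real)"
proof -
  define \<phi> where "\<phi> z = (indicator Q (\<Psi> z) * indicator R (snd z) :: real)" for z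
  have "(\<integral>\<omega>. \<phi> (E \<omega>, W \<omega>) \<partial>M) = (\<integral>\<omega>. (\<integral>\<omega>'. \<phi> (E \<omega>', W \<omega>) \<partial>M) \<partial>M)"
    by (rule integral_indep_eq_iterated[OF E W indep, where c=1]) (auto simp: \<phi>_def split: split_indicator)
  then show ?thesis by (simp add: \<phi>_def)
qed

text \<open>\<open>cond_prob\<close> says that \<open>\<pi>(g W)\<close> is a version of \<open>P(A | W)\<close>.\<close>
lemma (in prob_space) cond_indep_indicator_given_function:
  fixes \<pi> :: "'c \<Rightarrow> real"
  assumes W[measurable]: "W \<in> measurable M N2" and g[measurable]: "g \<in> measurable N2 N3"
    and [measurable]: "A \<in> sets M" "Y \<in> sets N2" "\<pi> \<in> borel_measurable N3"
    and bounded: "\<And>z. \<bar>\<pi> z\<bar> \<le> 1"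
    and cond_prob: "\<And>R. R \<in> sets N2 \<Longrightarrow>
      (\<integral>\<omega>. indicator A \<omega> * indicator R (W \<omega>) \<partial>M) = (\<integral>\<omega>. \<pi> (g (W \<omega>)) * indicator R (W \<omega>) \<partial>M)"
  defines "H \<equiv> vimage_algebra (space M) (\<lambda>\<omega>. g (W \<omega>)) N3" and "B \<equiv> W -` Y \<inter> space M"
  shows "AE \<omega> in M. real_cond_exp M H (indicator (A \<inter> B)) \<omega> =
    real_cond_exp M H (indicator A) \<omega> * real_cond_exp M H (indicator B) \<omega>"
proof -
  have gW: "(\<lambda>\<omega>. g (W \<omega>)) \<in> space M \<rightarrow> space N3"
    using measurable_space[OF measurable_compose[OF W g]] by auto
  have sets_H: "sets H = {(\<lambda>\<omega>. g (W \<omega>)) -` S \<inter> space M | S. S \<in> sets N3}"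
    unfolding H_def by (rule sets_vimage_algebra2[OF gW])
  have H: "subalgebra M H"
    unfolding subalgebra_def using sets_H by (auto simp: H_def)
  have [measurable]: "(\<lambda>\<omega>. g (W \<omega>)) \<in> measurable H N3"
    unfolding H_def by (rule measurable_vimage_algebra1[OF gW])
  show ?thesis
  proof (rule cond_indep_indicator_of_integral_eq[OF H, where \<phi>="\<lambda>\<omega>. \<pi> (g (W \<omega>))"])
    fix C assume "C \<in> sets H"
    then obtain S where S[measurable]: "S \<in> sets N3" and C: "C = (\<lambda>\<omega>. g (W \<omega>)) -` S \<inter> space M"
      using sets_H by auto
    define R where "R = g -` S \<inter> space N2"
    have [measurable]: "R \<in> sets N2" "R \<inter> Y \<in> sets N2"
      unfolding R_def by measurable
    have C_R: "indicator C \<omega> = (indicator R (W \<omega>) :: real)"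
      and B_C_R: "indicator (B \<inter> C) \<omega> = (indicator (R \<inter> Y) (W \<omega>) :: real)" if "\<omega> \<in> space M" for \<omega>
      using that measurable_space[OF W that] by (auto simp: B_def C R_def split: split_indicator)
    have "(\<integral>\<omega>. indicator (A \<inter> C) \<omega> \<partial>M) = (\<integral>\<omega>. indicator A \<omega> * indicator R (W \<omega>) \<partial>M :: real)"
      by (intro Bochner_Integration.integral_cong) (simp_all add: indicator_inter_arith C_R)
    also have "\<dots> = (\<integral>\<omega>. \<pi> (g (W \<omega>)) * indicator C \<omega> \<partial>M)"
      by (simp add: cond_prob C_R cong: Bochner_Integration.integral_cong)
    finally show "(\<integral>\<omega>. indicator (A \<inter> C) \<omega> \<partial>M) = (\<integral>\<omega>. \<pi> (g (W \<omega>)) * indicator C \<omega> \<partial>M)" .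
    have "(\<integral>\<omega>. indicator (A \<inter> B \<inter> C) \<omega> \<partial>M) = (\<integral>\<omega>. indicator A \<omega> * indicator (R \<inter> Y) (W \<omega>) \<partial>M :: real)"
      by (intro Bochner_Integration.integral_cong) (simp_all add: Int_assoc indicator_inter_arith[of A] B_C_R)
    also have "\<dots> = (\<integral>\<omega>. \<pi> (g (W \<omega>)) * indicator (B \<inter> C) \<omega> \<partial>M)"
      by (simp add: cond_prob B_C_R cong: Bochner_Integration.integral_cong)
    finally show "(\<integral>\<omega>. indicator (A \<inter> B \<inter> C) \<omega> \<partial>M) = (\<integral>\<omega>. \<pi> (g (W \<omega>)) * indicator (B \<inter> C) \<omega> \<partial>M)" .
  qed (use bounded in \<open>auto simp: B_def\<close>)
qed

text \<open>A version of \<open>P(\<Phi>(E, g W) \<in> Q | W)\<close> is \<open>\<pi>(g W)\<close> with \<open>\<pi> z = P(\<Phi>(E, z) \<in> Q)\<close>.\<close>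
lemma (in prob_space) cond_indep_of_indep_noise:
  assumes E[measurable]: "E \<in> measurable M N1" and W[measurable]: "W \<in> measurable M N2"
    and g[measurable]: "g \<in> measurable N2 N3" and h[measurable]: "h \<in> measurable N2 N4"
    and \<Phi>[measurable]: "(\<lambda>x. \<Phi> (fst x) (snd x)) \<in> measurable (N1 \<Otimes>\<^sub>M N3) N5"
    and indep: "distr M (N1 \<Otimes>\<^sub>M N2) (\<lambda>\<omega>. (E \<omega>, W \<omega>)) = distr M N1 E \<Otimes>\<^sub>M distr M N2 W"
  shows "cond_indep M (vimage_algebra (space M) (\<lambda>\<omega>. \<Phi> (E \<omega>) (g (W \<omega>))) N5)
    (vimage_algebra (space M) (\<lambda>\<omega>. h (W \<omega>)) N4) (vimage_algebra (space M) (\<lambda>\<omega>. g (W \<omega>)) N3)"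
  unfolding cond_indep_def
proof (intro ballI)
  have X: "(\<lambda>\<omega>. \<Phi> (E \<omega>) (g (W \<omega>))) \<in> measurable M N5"
    using measurable_compose[OF measurable_Pair[OF E measurable_compose[OF W g]] \<Phi>] by simp
  fix A B
  assume "A \<in> sets (vimage_algebra (space M) (\<lambda>\<omega>. \<Phi> (E \<omega>) (g (W \<omega>))) N5)"
  then obtain Q where Q[measurable]: "Q \<in> sets N5" and A: "A = (\<lambda>\<omega>. \<Phi> (E \<omega>) (g (W \<omega>))) -` Q \<inter> space M"
    using sets_vimage_algebra2[of "\<lambda>\<omega>. \<Phi> (E \<omega>) (g (W \<omega>))"] measurable_space[OF X] by auto
  assume "B \<in> sets (vimage_algebra (space M) (\<lambda>\<omega>. h (W \<omega>)) N4)"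
  then obtain U where U[measurable]: "U \<in> sets N4" and "B = (\<lambda>\<omega>. h (W \<omega>)) -` U \<inter> space M"
    using sets_vimage_algebra2[of "\<lambda>\<omega>. h (W \<omega>)"] measurable_space[OF measurable_compose[OF W h]] by auto
  then have B: "B = W -` (h -` U \<inter> space N2) \<inter> space M"
    using measurable_space[OF W] by auto
  define \<pi> where "\<pi> z = (\<integral>\<omega>. indicator Q (\<Phi> (E \<omega>) z) \<partial>M :: real)" for z
  have "(\<lambda>(z, \<omega>). indicator Q (\<Phi> (E \<omega>) z) :: real) \<in> borel_measurable (N3 \<Otimes>\<^sub>M M)"
    using measurable_compose[OF measurable_Pair[OF measurable_compose[OF measurable_snd E] measurable_fst] \<Phi>]
    by (simp add: case_prod_beta')
  then have \<pi>_measurable: "\<pi> \<in> borel_measurable N3"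
    unfolding \<pi>_def by (rule borel_measurable_lebesgue_integral)
  have \<pi>_bounded: "\<bar>\<pi> z\<bar> \<le> 1" for z
    unfolding \<pi>_def indicator_vimage[of "\<lambda>\<omega>. \<Phi> (E \<omega>) z" Q, symmetric] by simp
  have cond_prob: "(\<integral>\<omega>. indicator A \<omega> * indicator R (W \<omega>) \<partial>M) = (\<integral>\<omega>. \<pi> (g (W \<omega>)) * indicator R (W \<omega>) \<partial>M)"
    if "R \<in> sets N2" for R
  proof -
    have "(\<lambda>x. \<Phi> (fst x) (g (snd x))) \<in> measurable (N1 \<Otimes>\<^sub>M N2) N5"
      using measurable_compose[OF measurable_Pair[OF measurable_fst measurable_compose[OF measurable_snd g]] \<Phi>]
      by simp
    from integral_indicator_indep_noise[OF E W indep this Q that]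
    have "(\<integral>\<omega>. indicator Q (\<Phi> (E \<omega>) (g (W \<omega>))) * indicator R (W \<omega>) \<partial>M) =
        (\<integral>\<omega>. \<pi> (g (W \<omega>)) * indicator R (W \<omega>) \<partial>M)"
      by (simp add: \<pi>_def)
    moreover have "(\<integral>\<omega>. indicator A \<omega> * indicator R (W \<omega>) \<partial>M) =
        (\<integral>\<omega>. indicator Q (\<Phi> (E \<omega>) (g (W \<omega>))) * indicator R (W \<omega>) \<partial>M :: real)"
      by (intro Bochner_Integration.integral_cong) (auto simp: A split: split_indicator)
    ultimately show ?thesis by simp
  qed
  have "A \<in> sets M" unfolding A using X Q by (rule measurable_sets)
  then show "AE \<omega> in M. real_cond_exp M (vimage_algebra (space M) (\<lambda>\<omega>. g (W \<omega>)) N3) (indicator (A \<inter> B)) \<omega> =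
      real_cond_exp M (vimage_algebra (space M) (\<lambda>\<omega>. g (W \<omega>)) N3) (indicator A) \<omega> *
      real_cond_exp M (vimage_algebra (space M) (\<lambda>\<omega>. g (W \<omega>)) N3) (indicator B) \<omega>"
    unfolding B by (rule cond_indep_indicator_given_function[OF W g _ _ \<pi>_measurable \<pi>_bounded cond_prob]) simp
qed

section \<open>Centred Gaussian families\<close>

lemma AE_eq_of_distr_eq_return:
  fixes S :: "'a \<Rightarrow> real"
  assumes [measurable]: "S \<in> borel_measurable M" and "distr M borel S = return borel c"
  shows "AE \<omega> in M. S \<omega> = c"
proof -
  have "AE x in distr M borel S. x = c"
    unfolding assms(2) by (subst AE_return) auto
  then show ?thesis by (rule AE_distrD[rotated]) measurable
qed

lemma (in prob_space) gaussian_rv_integrable: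
  assumes "gaussian_rv M S"
  shows "integrable M S"
proof -
  have [measurable]: "S \<in> borel_measurable M" using assms by (simp add: gaussian_rv_def)
  consider (degenerate) c where "distr M borel S = return borel c"
    | (normal) m \<sigma> where "\<sigma> > 0" "distributed M lborel S (normal_density m \<sigma>)"
    using assms unfolding gaussian_rv_def by blast
  then show ?thesis
  proof cases
    case degenerate
    then have "AE \<omega> in M. S \<omega> = c"
      by (intro AE_eq_of_distr_eq_return) simp
    then show ?thesis by (simp add: integrable_cong_AE[of S M "\<lambda>_. c"])
  next
    case normal
    then show ?thesis
      using distributed_integrable[OF normal(2), of "\<lambda>x. x"] integrable_normal_moment_nz_1[OF normal(1), of m]
      by (simp add: mult.commute)
  qed
qed

lemma (in prob_space) centered_gaussian_rv_char:
  assumes "gaussian_rv M S" and centered: "expectation S = 0"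
  shows "integrable M (\<lambda>\<omega>. (S \<omega>)\<^sup>2)"
    and "(CLINT \<omega>|M. iexp (S \<omega>)) = exp (- expectation (\<lambda>\<omega>. (S \<omega>)\<^sup>2) / 2)"
proof -
  have [measurable]: "S \<in> borel_measurable M" using assms by (simp add: gaussian_rv_def)
  consider (degenerate) c where "distr M borel S = return borel c"
    | (normal) m \<sigma> where "\<sigma> > 0" "distributed M lborel S (normal_density m \<sigma>)"
    using assms unfolding gaussian_rv_def by blast
  then have "integrable M (\<lambda>\<omega>. (S \<omega>)\<^sup>2) \<and> (CLINT \<omega>|M. iexp (S \<omega>)) = exp (- expectation (\<lambda>\<omega>. (S \<omega>)\<^sup>2) / 2)"
  proof cases
    case degenerate
    then have "AE \<omega> in M. S \<omega> = c"
      by (intro AE_eq_of_distr_eq_return) simp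
    moreover from this have "c = 0"
      using centered integral_cong_AE[of S M "\<lambda>_. c"] by (simp add: prob_space)
    ultimately have "AE \<omega> in M. S \<omega> = 0" by simp
    moreover from this have "AE \<omega> in M. iexp (S \<omega>) = 1" by eventually_elim simp
    ultimately show ?thesis
      by (simp add: integrable_cong_AE[of _ M "\<lambda>_. 0"] integral_cong_AE[of _ M "\<lambda>_. 0"]
          integral_cong_AE[of _ M "\<lambda>_. 1"] prob_space)
  next
    case normal
    then have "m = 0" using centered normal_distributed_expectation by simp
    with normal have S: "distributed M lborel S (normal_density 0 \<sigma>)" by simp
    have "integrable M (\<lambda>\<omega>. (S \<omega>)\<^sup>2)"
      using distributed_integrable[OF S, of "\<lambda>x. x\<^sup>2"] integrable_normal_moment[OF normal(1), of 0 2] by simp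
    moreover have "expectation (\<lambda>\<omega>. (S \<omega>)\<^sup>2) = \<sigma>\<^sup>2"
      using normal_distributed_variance[OF normal(1) S] normal_distributed_expectation[OF normal(1) S] by simp
    moreover have "(CLINT \<omega>|M. iexp (S \<omega>)) = exp (- \<sigma>\<^sup>2 / 2)"
    proof -
      have Z: "distributed M lborel (\<lambda>\<omega>. S \<omega> / \<sigma>) std_normal_density"
        using normal_standard_normal_convert[OF normal(1)] S by simp
      have "(CLINT \<omega>|M. iexp (S \<omega>)) = (CLINT \<omega>|M. iexp (\<sigma> * (S \<omega> / \<sigma>)))"
        using normal(1) by simp
      also have "\<dots> = char std_normal_distribution \<sigma>"
        unfolding char_def distributed_distr_eq_density[OF Z, symmetric]
        by (subst integral_distr) (use distributed_measurable[OF Z] in auto)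
      also have "\<dots> = exp (- \<sigma>\<^sup>2 / 2)"
        by (simp add: char_std_normal_distribution)
      finally show ?thesis .
    qed
    ultimately show ?thesis by simp
  qed
  then show "integrable M (\<lambda>\<omega>. (S \<omega>)\<^sup>2)"
    and "(CLINT \<omega>|M. iexp (S \<omega>)) = exp (- expectation (\<lambda>\<omega>. (S \<omega>)\<^sup>2) / 2)"
    by simp_all
qed

definition is_lin_comb :: "('i \<Rightarrow> 'w \<Rightarrow> real) \<Rightarrow> 'i set \<Rightarrow> ('w \<Rightarrow> real) \<Rightarrow> bool" where
  "is_lin_comb X I g \<longleftrightarrow> (\<exists>J c. finite J \<and> J \<subseteq> I \<and> g = (\<lambda>\<omega>. \<Sum>j\<in>J. c j * X j \<omega>))"

lemma is_lin_comb_component: "i \<in> I \<Longrightarrow> is_lin_comb X I (X i)"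
  unfolding is_lin_comb_def by (intro exI[of _ "{i}"] exI[of _ "\<lambda>_. 1"]) auto

lemma is_lin_comb_zero: "is_lin_comb X I (\<lambda>_. 0)"
  unfolding is_lin_comb_def by (intro exI[of _ "{}"]) auto

lemma is_lin_comb_add:
  assumes "is_lin_comb X I g" "is_lin_comb X I h"
  shows "is_lin_comb X I (\<lambda>\<omega>. g \<omega> + h \<omega>)"
proof -
  obtain J1 c1 where J1: "finite J1" "J1 \<subseteq> I" "g = (\<lambda>\<omega>. \<Sum>j\<in>J1. c1 j * X j \<omega>)"
    using assms(1) unfolding is_lin_comb_def by blast
  obtain J2 c2 where J2: "finite J2" "J2 \<subseteq> I" "h = (\<lambda>\<omega>. \<Sum>j\<in>J2. c2 j * X j \<omega>)"
    using assms(2) unfolding is_lin_comb_def by blast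
  define c where "c j = (if j \<in> J1 then c1 j else 0) + (if j \<in> J2 then c2 j else 0)" for j
  have "(\<Sum>j\<in>J1 \<union> J2. (if j \<in> J1 then c1 j else 0) * X j \<omega>) = (\<Sum>j\<in>J1. c1 j * X j \<omega>)"
    "(\<Sum>j\<in>J1 \<union> J2. (if j \<in> J2 then c2 j else 0) * X j \<omega>) = (\<Sum>j\<in>J2. c2 j * X j \<omega>)" for \<omega>
    using J1(1) J2(1) by (intro sum.mono_neutral_cong_right; auto)+
  then have "(\<lambda>\<omega>. g \<omega> + h \<omega>) = (\<lambda>\<omega>. \<Sum>j\<in>J1 \<union> J2. c j * X j \<omega>)"
    by (simp add: J1(3) J2(3) c_def distrib_right sum.distrib)
  then show ?thesis
    unfolding is_lin_comb_def using J1 J2 by blast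
qed

lemma is_lin_comb_cmult:
  assumes "is_lin_comb X I g"
  shows "is_lin_comb X I (\<lambda>\<omega>. a * g \<omega>)"
proof -
  obtain J c where "finite J" "J \<subseteq> I" "g = (\<lambda>\<omega>. \<Sum>j\<in>J. c j * X j \<omega>)"
    using assms unfolding is_lin_comb_def by blast
  then show ?thesis unfolding is_lin_comb_def
    by (intro exI[of _ J] exI[of _ "\<lambda>j. a * c j"]) (auto simp: sum_distrib_left mult.assoc)
qed

lemma is_lin_comb_sum:
  assumes "finite S" "\<And>s. s \<in> S \<Longrightarrow> is_lin_comb X I (g s)"
  shows "is_lin_comb X I (\<lambda>\<omega>. \<Sum>s\<in>S. g s \<omega>)"
  using assms by (induction S rule: finite_induct) (auto intro: is_lin_comb_zero is_lin_comb_add)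

lemma is_lin_comb_diff:
  assumes "is_lin_comb X I g" "is_lin_comb X I h"
  shows "is_lin_comb X I (\<lambda>\<omega>. g \<omega> - h \<omega>)"
  using is_lin_comb_add[OF assms(1) is_lin_comb_cmult[OF assms(2), of "-1"]] by simp

lemma is_lin_comb_factor:
  assumes "is_lin_comb X I g"
  shows "\<exists>G\<in>borel_measurable (PiM I (\<lambda>_. borel)). g = (\<lambda>\<omega>. G (restrict (\<lambda>i. X i \<omega>) I))"
proof -
  obtain J c where J: "finite J" "J \<subseteq> I" "g = (\<lambda>\<omega>. \<Sum>j\<in>J. c j * X j \<omega>)"
    using assms unfolding is_lin_comb_def by blast
  show ?thesis
  proof (intro bexI[of _ "\<lambda>v. \<Sum>j\<in>J. c j * v j"])
    show "(\<lambda>v. \<Sum>j\<in>J. c j * v j) \<in> borel_measurable (PiM I (\<lambda>_. borel))"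
      using J(2) by (auto intro!: borel_measurable_sum borel_measurable_times measurable_component_singleton)
    show "g = (\<lambda>\<omega>. \<Sum>j\<in>J. c j * restrict (\<lambda>i. X i \<omega>) I j)"
      unfolding J(3) using J(2) by (intro ext sum.cong) auto
  qed
qed

lemma is_lin_comb_measurable:
  assumes "\<And>i. i \<in> I \<Longrightarrow> X i \<in> borel_measurable M" "is_lin_comb X I g"
  shows "g \<in> borel_measurable M"
  using assms unfolding is_lin_comb_def by (auto intro!: borel_measurable_sum borel_measurable_times)

lemma gaussian_rv_lin_comb:
  assumes "jointly_gaussian M I X" "is_lin_comb X I g"
  shows "gaussian_rv M g"
  using assms unfolding jointly_gaussian_def is_lin_comb_def by auto

definition centered_gaussian_process :: "'w measure \<Rightarrow> 'i set \<Rightarrow> ('i \<Rightarrow> 'w \<Rightarrow> real) \<Rightarrow> bool" where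
  "centered_gaussian_process M I X \<longleftrightarrow> jointly_gaussian M I X \<and> (\<forall>i\<in>I. integral\<^sup>L M (X i) = 0)"

lemma (in prob_space) centered_gaussian_process_lin_comb:
  assumes X: "centered_gaussian_process M I X" and g: "is_lin_comb X I g"
  shows "g \<in> borel_measurable M" and "integrable M g" and "expectation g = 0"
    and "integrable M (\<lambda>\<omega>. (g \<omega>)\<^sup>2)"
    and "(CLINT \<omega>|M. iexp (g \<omega>)) = exp (- expectation (\<lambda>\<omega>. (g \<omega>)\<^sup>2) / 2)"
proof -
  have gaussian: "jointly_gaussian M I X" and centered: "\<And>i. i \<in> I \<Longrightarrow> expectation (X i) = 0"
    using X by (auto simp: centered_gaussian_process_def)
  have "X i \<in> borel_measurable M" if "i \<in> I" for i
    using gaussian that unfolding jointly_gaussian_def by blast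
  then show "g \<in> borel_measurable M" by (rule is_lin_comb_measurable[OF _ g])
  have integrable: "integrable M h" if "is_lin_comb X I h" for h
    by (rule gaussian_rv_integrable[OF gaussian_rv_lin_comb[OF gaussian that]])
  then show "integrable M g" using g .
  obtain J c where J: "finite J" "J \<subseteq> I" "g = (\<lambda>\<omega>. \<Sum>j\<in>J. c j * X j \<omega>)"
    using g unfolding is_lin_comb_def by blast
  have "expectation g = (\<Sum>j\<in>J. c j * expectation (X j))"
    unfolding J(3) using J(2)
    by (subst Bochner_Integration.integral_sum) (auto intro!: integrable is_lin_comb_component)
  also have "\<dots> = 0"
    using J(2) centered by (intro sum.neutral) auto
  finally show "expectation g = 0" .
  then show "integrable M (\<lambda>\<omega>. (g \<omega>)\<^sup>2)"
    and "(CLINT \<omega>|M. iexp (g \<omega>)) = exp (- expectation (\<lambda>\<omega>. (g \<omega>)\<^sup>2) / 2)"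
    using centered_gaussian_rv_char[OF gaussian_rv_lin_comb[OF gaussian g]] by simp_all
qed

lemma integrable_mult_of_square_integrable:
  fixes f g :: "'a \<Rightarrow> real"
  assumes "integrable M (\<lambda>x. (f x)\<^sup>2)" "integrable M (\<lambda>x. (g x)\<^sup>2)"
    and "f \<in> borel_measurable M" "g \<in> borel_measurable M"
  shows "integrable M (\<lambda>x. f x * g x)"
proof (rule Bochner_Integration.integrable_bound)
  show "integrable M (\<lambda>x. (f x)\<^sup>2 + (g x)\<^sup>2)" using assms by auto
  have "\<bar>a * b\<bar> \<le> a\<^sup>2 + b\<^sup>2" for a b :: real
  proof -
    have "0 \<le> (\<bar>a\<bar> - \<bar>b\<bar>)\<^sup>2" by simp
    also have "\<dots> = a\<^sup>2 + b\<^sup>2 - 2 * \<bar>a * b\<bar>"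
      by (simp add: power2_eq_square algebra_simps abs_mult)
    finally show ?thesis by simp
  qed
  then show "AE x in M. norm (f x * g x) \<le> norm ((f x)\<^sup>2 + (g x)\<^sup>2)" by auto
qed (use assms in auto)

lemma (in prob_space) char_sum_indep:
  assumes "indep_vars (\<lambda>_. borel) X S"
  shows "(CLINT \<omega>|M. iexp (\<Sum>p\<in>S. X p \<omega>)) = (\<Prod>p\<in>S. CLINT \<omega>|M. iexp (X p \<omega>))"
proof -
  have [measurable]: "X p \<in> borel_measurable M" if "p \<in> S" for p
    using assms that unfolding indep_vars_def by auto
  have "(CLINT \<omega>|M. iexp (\<Sum>p\<in>S. X p \<omega>)) = char (distr M borel (\<lambda>\<omega>. \<Sum>p\<in>S. X p \<omega>)) 1"
    unfolding char_def by (subst integral_distr) auto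
  also have "\<dots> = (\<Prod>p\<in>S. char (distr M borel (X p)) 1)"
    by (rule char_distr_sum[OF assms])
  also have "\<dots> = (\<Prod>p\<in>S. CLINT \<omega>|M. iexp (X p \<omega>))"
    unfolding char_def by (intro prod.cong refl) (subst integral_distr, auto)
  finally show ?thesis .
qed

lemma (in prob_space) indep_vars_lin_comb:
  assumes indep: "indep_vars (\<lambda>_. PiM K (\<lambda>_. borel)) (\<lambda>p \<omega>. restrict (\<lambda>i. f p i \<omega>) K) S"
    and g: "\<And>p. p \<in> S \<Longrightarrow> is_lin_comb (f p) K (g p)"
  shows "indep_vars (\<lambda>_. borel) g S"
proof -
  obtain G where G: "\<And>p. p \<in> S \<Longrightarrow> G p \<in> borel_measurable (PiM K (\<lambda>_. borel))"
    "\<And>p. p \<in> S \<Longrightarrow> g p = (\<lambda>\<omega>. G p (restrict (\<lambda>i. f p i \<omega>) K))"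
    using is_lin_comb_factor[OF g] by metis
  have "indep_vars (\<lambda>_. borel) (\<lambda>p \<omega>. G p (restrict (\<lambda>i. f p i \<omega>) K)) S"
    by (rule indep_vars_compose2[OF indep G(1)])
  then show ?thesis
    by (rule indep_vars_cong[THEN iffD1, rotated -1]) (auto simp: G(2))
qed

text \<open>A centred Gaussian \<open>X\<close> has \<open>E exp(i X) = exp(- E X^2 / 2)\<close>, and \<open>E (a + b)^2 = E a^2 + E b^2\<close>
  for uncorrelated \<open>a\<close> and \<open>b\<close>.\<close>
lemma (in prob_space) char_sum_uncorrelated_gaussian:
  assumes indep: "indep_vars (\<lambda>_. PiM K (\<lambda>_. borel)) (\<lambda>p \<omega>. restrict (\<lambda>i. f p i \<omega>) K) S"
    and gaussian: "\<And>p. p \<in> S \<Longrightarrow> centered_gaussian_process M K (f p)"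
    and a: "\<And>p. p \<in> S \<Longrightarrow> is_lin_comb (f p) K (a p)"
    and b: "\<And>p. p \<in> S \<Longrightarrow> is_lin_comb (f p) K (b p)"
    and uncorrelated: "\<And>p. p \<in> S \<Longrightarrow> expectation (\<lambda>\<omega>. a p \<omega> * b p \<omega>) = 0"
  shows "(CLINT \<omega>|M. iexp (\<Sum>p\<in>S. a p \<omega> + b p \<omega>)) =
    (CLINT \<omega>|M. iexp (\<Sum>p\<in>S. a p \<omega>)) * (CLINT \<omega>|M. iexp (\<Sum>p\<in>S. b p \<omega>))"
proof -
  have ab: "is_lin_comb (f p) K (\<lambda>\<omega>. a p \<omega> + b p \<omega>)" if "p \<in> S" for p
    using a[OF that] b[OF that] by (rule is_lin_comb_add)
  have factor: "(CLINT \<omega>|M. iexp (a p \<omega> + b p \<omega>)) = (CLINT \<omega>|M. iexp (a p \<omega>)) * (CLINT \<omega>|M. iexp (b p \<omega>))"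
    if p: "p \<in> S" for p
  proof -
    note moments = centered_gaussian_process_lin_comb[OF gaussian[OF p]]
    have "integrable M (\<lambda>\<omega>. a p \<omega> * b p \<omega>)"
      using moments[OF a[OF p]] moments[OF b[OF p]] by (intro integrable_mult_of_square_integrable) auto
    have "expectation (\<lambda>\<omega>. (a p \<omega> + b p \<omega>)\<^sup>2) =
        expectation (\<lambda>\<omega>. (a p \<omega>)\<^sup>2 + ((b p \<omega>)\<^sup>2 + 2 * (a p \<omega> * b p \<omega>)))"
      by (simp add: power2_sum ac_simps)
    also have "\<dots> = expectation (\<lambda>\<omega>. (a p \<omega>)\<^sup>2) + expectation (\<lambda>\<omega>. (b p \<omega>)\<^sup>2)"
      using \<open>integrable M (\<lambda>\<omega>. a p \<omega> * b p \<omega>)\<close> moments[OF a[OF p]] moments[OF b[OF p]] uncorrelated[OF p]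
      by (simp add: Bochner_Integration.integral_add)
    finally have "expectation (\<lambda>\<omega>. (a p \<omega> + b p \<omega>)\<^sup>2) =
        expectation (\<lambda>\<omega>. (a p \<omega>)\<^sup>2) + expectation (\<lambda>\<omega>. (b p \<omega>)\<^sup>2)" .
    then show ?thesis
      using moments(5)[OF a[OF p]] moments(5)[OF b[OF p]] moments(5)[OF ab[OF p]]
      by (simp add: of_real_mult[symmetric] exp_add[symmetric] add_divide_distrib[symmetric])
  qed
  have "(CLINT \<omega>|M. iexp (\<Sum>p\<in>S. a p \<omega> + b p \<omega>)) = (\<Prod>p\<in>S. CLINT \<omega>|M. iexp (a p \<omega> + b p \<omega>))"
    by (rule char_sum_indep[OF indep_vars_lin_comb[OF indep ab]])
  also have "\<dots> = (\<Prod>p\<in>S. (CLINT \<omega>|M. iexp (a p \<omega>)) * (CLINT \<omega>|M. iexp (b p \<omega>)))"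
    by (rule prod.cong[OF refl factor])
  also have "\<dots> = (\<Prod>p\<in>S. CLINT \<omega>|M. iexp (a p \<omega>)) * (\<Prod>p\<in>S. CLINT \<omega>|M. iexp (b p \<omega>))"
    by (rule prod.distrib)
  also have "\<dots> = (CLINT \<omega>|M. iexp (\<Sum>p\<in>S. a p \<omega>)) * (CLINT \<omega>|M. iexp (\<Sum>p\<in>S. b p \<omega>))"
    by (simp only: char_sum_indep[OF indep_vars_lin_comb[OF indep a]] char_sum_indep[OF indep_vars_lin_comb[OF indep b]])
  finally show ?thesis .
qed

lemma (in prob_space) char_pair_measure:
  fixes X Y :: "'a \<Rightarrow> real"
  assumes [measurable]: "X \<in> borel_measurable M" "Y \<in> borel_measurable M"
  shows "(CLINT \<omega>|M \<Otimes>\<^sub>M M. iexp (X (fst \<omega>) + Y (snd \<omega>))) = (CLINT \<omega>|M. iexp (X \<omega>)) * (CLINT \<omega>|M. iexp (Y \<omega>))"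
proof -
  interpret pair_prob_space M M by unfold_locales
  have "integrable (M \<Otimes>\<^sub>M M) (\<lambda>(x, y). iexp (X x + Y y))"
    by (rule P.integrable_const_bound[where B=1]) (auto simp: case_prod_beta')
  from integral_snd[OF this]
  have "(CLINT \<omega>|M \<Otimes>\<^sub>M M. iexp (X (fst \<omega>) + Y (snd \<omega>))) = (CLINT y|M. (CLINT x|M. iexp (X x + Y y)))"
    by (simp add: case_prod_beta')
  also have "\<dots> = (CLINT y|M. (CLINT x|M. iexp (X x)) * iexp (Y y))"
    by (simp add: exp_add distrib_left)
  finally show ?thesis by simp
qed

lemma (in prob_space) char_uncorrelated_gaussian_sums:
  fixes x :: "'p \<Rightarrow> 'l \<Rightarrow> 'a \<Rightarrow> real" and y :: "'p \<Rightarrow> 'r \<Rightarrow> 'a \<Rightarrow> real"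
  assumes "finite L" "finite R"
    and indep: "indep_vars (\<lambda>_. PiM K (\<lambda>_. borel)) (\<lambda>p \<omega>. restrict (\<lambda>i. f p i \<omega>) K) S"
    and gaussian: "\<And>p. p \<in> S \<Longrightarrow> centered_gaussian_process M K (f p)"
    and x: "\<And>p l. p \<in> S \<Longrightarrow> l \<in> L \<Longrightarrow> is_lin_comb (f p) K (x p l)"
    and y: "\<And>p r. p \<in> S \<Longrightarrow> r \<in> R \<Longrightarrow> is_lin_comb (f p) K (y p r)"
    and uncorrelated: "\<And>p l r. p \<in> S \<Longrightarrow> l \<in> L \<Longrightarrow> r \<in> R \<Longrightarrow> expectation (\<lambda>\<omega>. x p l \<omega> * y p r \<omega>) = 0"
  shows "(CLINT \<omega>|M. iexp ((\<Sum>l\<in>L. s l * (\<Sum>p\<in>S. x p l \<omega>)) + (\<Sum>r\<in>R. t r * (\<Sum>p\<in>S. y p r \<omega>)))) =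
    (CLINT \<omega>|M \<Otimes>\<^sub>M M. iexp ((\<Sum>l\<in>L. s l * (\<Sum>p\<in>S. x p l (fst \<omega>))) + (\<Sum>r\<in>R. t r * (\<Sum>p\<in>S. y p r (snd \<omega>)))))"
proof -
  define a where "a p \<omega> = (\<Sum>l\<in>L. s l * x p l \<omega>)" for p \<omega>
  define b where "b p \<omega> = (\<Sum>r\<in>R. t r * y p r \<omega>)" for p \<omega>
  have a: "is_lin_comb (f p) K (a p)" and b: "is_lin_comb (f p) K (b p)" if "p \<in> S" for p
    unfolding a_def b_def using that assms(1,2) x y by (auto intro!: is_lin_comb_sum is_lin_comb_cmult)
  note moments = centered_gaussian_process_lin_comb[OF gaussian]
  have "expectation (\<lambda>\<omega>. a p \<omega> * b p \<omega>) = 0" if p: "p \<in> S" for p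
  proof -
    have "integrable M (\<lambda>\<omega>. x p l \<omega> * y p r \<omega>)" if "l \<in> L" "r \<in> R" for l r
      using moments[OF p x[OF p that(1)]] moments[OF p y[OF p that(2)]]
      by (intro integrable_mult_of_square_integrable) auto
    then have "expectation (\<lambda>\<omega>. a p \<omega> * b p \<omega>) =
        (\<Sum>l\<in>L. \<Sum>r\<in>R. s l * t r * expectation (\<lambda>\<omega>. x p l \<omega> * y p r \<omega>))"
      unfolding a_def b_def sum_product
      by (simp add: Bochner_Integration.integral_sum mult_ac)
    then show ?thesis using uncorrelated[OF p] by simp
  qed
  then have "(CLINT \<omega>|M. iexp (\<Sum>p\<in>S. a p \<omega> + b p \<omega>)) =
      (CLINT \<omega>|M. iexp (\<Sum>p\<in>S. a p \<omega>)) * (CLINT \<omega>|M. iexp (\<Sum>p\<in>S. b p \<omega>))"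
    using gaussian a b by (intro char_sum_uncorrelated_gaussian[OF indep]) auto
  also have "\<dots> = (CLINT \<omega>|M \<Otimes>\<^sub>M M. iexp ((\<Sum>p\<in>S. a p (fst \<omega>)) + (\<Sum>p\<in>S. b p (snd \<omega>))))"
    using moments(1)[OF _ a] moments(1)[OF _ b] by (intro char_pair_measure[symmetric]) auto
  finally show ?thesis
    by (simp add: a_def b_def sum.distrib sum_distrib_left sum.swap[of _ S])
qed

lemma (in prob_space) indep_uncorrelated_gaussian_sums:
  fixes x :: "'p \<Rightarrow> 'l \<Rightarrow> 'a \<Rightarrow> real" and y :: "'p \<Rightarrow> 'r \<Rightarrow> 'a \<Rightarrow> real"
  assumes fin: "finite L" "finite R"
    and indep: "indep_vars (\<lambda>_. PiM K (\<lambda>_. borel)) (\<lambda>p \<omega>. restrict (\<lambda>i. f p i \<omega>) K) S"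
    and gaussian: "\<And>p. p \<in> S \<Longrightarrow> centered_gaussian_process M K (f p)"
    and x: "\<And>p l. p \<in> S \<Longrightarrow> l \<in> L \<Longrightarrow> is_lin_comb (f p) K (x p l)"
    and y: "\<And>p r. p \<in> S \<Longrightarrow> r \<in> R \<Longrightarrow> is_lin_comb (f p) K (y p r)"
    and uncorrelated: "\<And>p l r. p \<in> S \<Longrightarrow> l \<in> L \<Longrightarrow> r \<in> R \<Longrightarrow> expectation (\<lambda>\<omega>. x p l \<omega> * y p r \<omega>) = 0"
  defines "X \<equiv> \<lambda>\<omega>. restrict (\<lambda>l. \<Sum>p\<in>S. x p l \<omega>) L" and "Y \<equiv> \<lambda>\<omega>. restrict (\<lambda>r. \<Sum>p\<in>S. y p r \<omega>) R"
  shows "distr M (PiM L (\<lambda>_. borel) \<Otimes>\<^sub>M PiM R (\<lambda>_. borel)) (\<lambda>\<omega>. (X \<omega>, Y \<omega>)) =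
    distr M (PiM L (\<lambda>_. borel)) X \<Otimes>\<^sub>M distr M (PiM R (\<lambda>_. borel)) Y"
proof -
  note moments = centered_gaussian_process_lin_comb[OF gaussian]
  have x_meas: "(\<lambda>\<omega>. \<Sum>p\<in>S. x p l \<omega>) \<in> borel_measurable M" if "l \<in> L" for l
    using moments(1)[OF _ x] that by auto
  have y_meas: "(\<lambda>\<omega>. \<Sum>p\<in>S. y p r \<omega>) \<in> borel_measurable M" if "r \<in> R" for r
    using moments(1)[OF _ y] that by auto
  have [measurable]: "X \<in> measurable M (PiM L (\<lambda>_. borel))" "Y \<in> measurable M (PiM R (\<lambda>_. borel))"
    unfolding X_def Y_def using x_meas y_meas by (auto intro!: measurable_restrict)
  define V where "V k = (case k of Inl l \<Rightarrow> (\<lambda>\<omega>. \<Sum>p\<in>S. x p l \<omega>) | Inr r \<Rightarrow> (\<lambda>\<omega>. \<Sum>p\<in>S. y p r \<omega>))"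
    for k
  define V' where "V' k = (case k of Inl l \<Rightarrow> (\<lambda>\<omega>. \<Sum>p\<in>S. x p l (fst \<omega>)) | Inr r \<Rightarrow> (\<lambda>\<omega>. \<Sum>p\<in>S. y p r (snd \<omega>)))"
    for k
  have V_meas: "V k \<in> borel_measurable M" "V' k \<in> borel_measurable (M \<Otimes>\<^sub>M M)" if "k \<in> L <+> R" for k
    using that x_meas y_meas
    by (auto simp: V_def V'_def intro: measurable_compose[OF measurable_fst] measurable_compose[OF measurable_snd])
  have law: "distr M (PiM (L <+> R) (\<lambda>_. borel)) (\<lambda>\<omega>. restrict (\<lambda>k. V k \<omega>) (L <+> R)) =
      distr (M \<Otimes>\<^sub>M M) (PiM (L <+> R) (\<lambda>_. borel)) (\<lambda>\<omega>. restrict (\<lambda>k. V' k \<omega>) (L <+> R))"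
  proof (rule distr_restrict_eq_of_char_eq)
    fix t :: "'l + 'r \<Rightarrow> real"
    show "(CLINT \<omega>|M. iexp (\<Sum>k\<in>L <+> R. t k * V k \<omega>)) = (CLINT \<omega>|M \<Otimes>\<^sub>M M. iexp (\<Sum>k\<in>L <+> R. t k * V' k \<omega>))"
      using char_uncorrelated_gaussian_sums[OF fin indep gaussian x y uncorrelated, where s="t \<circ> Inl" and t="t \<circ> Inr"]
      by (simp add: sum.Plus[OF fin] V_def V'_def)
  next
    interpret pair_prob_space M M by unfold_locales
    show "finite_measure M" "finite_measure (M \<Otimes>\<^sub>M M)" by unfold_locales
  qed (use fin V_meas in auto)
  define split where "split v = (restrict (\<lambda>l. v (Inl l)) L, restrict (\<lambda>r. v (Inr r)) R)"
    for v :: "'l + 'r \<Rightarrow> real"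
  have [measurable]: "split \<in> measurable (PiM (L <+> R) (\<lambda>_. borel)) (PiM L (\<lambda>_. borel) \<Otimes>\<^sub>M PiM R (\<lambda>_. borel))"
    unfolding split_def by (intro measurable_Pair measurable_restrict measurable_component_singleton) auto
  have [measurable]: "(\<lambda>\<omega>. restrict (\<lambda>k. V k \<omega>) (L <+> R)) \<in> measurable M (PiM (L <+> R) (\<lambda>_. borel))"
    "(\<lambda>\<omega>. restrict (\<lambda>k. V' k \<omega>) (L <+> R)) \<in> measurable (M \<Otimes>\<^sub>M M) (PiM (L <+> R) (\<lambda>_. borel))"
    using V_meas by (auto intro!: measurable_restrict)
  have XY: "(\<lambda>\<omega>. (X \<omega>, Y \<omega>)) = split \<circ> (\<lambda>\<omega>. restrict (\<lambda>k. V k \<omega>) (L <+> R))"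
    and XY': "(\<lambda>\<omega>. (X (fst \<omega>), Y (snd \<omega>))) = split \<circ> (\<lambda>\<omega>. restrict (\<lambda>k. V' k \<omega>) (L <+> R))"
    by (auto simp: split_def X_def Y_def V_def V'_def fun_eq_iff)
  have "distr M (PiM L (\<lambda>_. borel) \<Otimes>\<^sub>M PiM R (\<lambda>_. borel)) (\<lambda>\<omega>. (X \<omega>, Y \<omega>)) =
      distr (distr M (PiM (L <+> R) (\<lambda>_. borel)) (\<lambda>\<omega>. restrict (\<lambda>k. V k \<omega>) (L <+> R)))
        (PiM L (\<lambda>_. borel) \<Otimes>\<^sub>M PiM R (\<lambda>_. borel)) split"
    unfolding XY by (rule distr_distr[symmetric]) measurable
  also have "\<dots> = distr (M \<Otimes>\<^sub>M M) (PiM L (\<lambda>_. borel) \<Otimes>\<^sub>M PiM R (\<lambda>_. borel)) (\<lambda>\<omega>. (X (fst \<omega>), Y (snd \<omega>)))"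
    unfolding law XY' by (rule distr_distr) measurable
  also have "\<dots> = distr M (PiM L (\<lambda>_. borel)) X \<Otimes>\<^sub>M distr M (PiM R (\<lambda>_. borel)) Y"
    by (rule pair_measure_distr_self[symmetric]) measurable
  finally show ?thesis .
qed

section \<open>Kriging residuals of a separable process\<close>

lemma invertible_mat_left_inverse:
  fixes K :: "'a::comm_ring_1 mat"
  assumes "invertible_mat K" "K \<in> carrier_mat n n"
  shows "\<exists>B. \<forall>k<n. \<forall>j<n. (\<Sum>i<n. B k i * K $$ (i, j)) = (if k = j then 1 else 0)"
proof -
  obtain B where KB: "K * B = 1\<^sub>m (dim_row K)" and BK: "B * K = 1\<^sub>m (dim_row B)"
    using assms(1) unfolding invertible_mat_def inverts_mat_def by blast
  have dims: "dim_row K = n" "dim_col K = n" using assms(2) by auto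
  have dims_B: "dim_col B = n" "dim_row B = n"
    using arg_cong[OF KB, of dim_col] arg_cong[OF BK, of dim_col] dims by simp_all
  have "(\<Sum>i<n. B $$ (k, i) * K $$ (i, j)) = (if k = j then 1 else 0)" if "k < n" "j < n" for k j
  proof -
    have "(B * K) $$ (k, j) = (\<Sum>i<n. B $$ (k, i) * K $$ (i, j))"
      using that dims dims_B by (simp add: scalar_prod_def lessThan_atLeast0 row_def col_def)
    then show ?thesis using BK dims_B that by simp
  qed
  then show ?thesis by (intro exI[of _ "\<lambda>k i. B $$ (k, i)"]) simp
qed

text \<open>The weights are the row vector \<open>\<kappa>(r, Z)\<close> times the inverse of the Gram matrix of \<open>\<kappa>\<close>
  on \<open>Z\<close>.\<close>
lemma nondegenerate_kernel_interpolation: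
  assumes nd: "nondegenerate_kernel S \<kappa>" and "finite Z" "Z \<subseteq> S"
  shows "\<exists>w. \<forall>z\<in>Z. (\<Sum>z'\<in>Z. w z' * \<kappa> z' z) = \<kappa> r z"
proof -
  obtain xs where xs: "distinct xs" "set xs = Z" using finite_distinct_list[OF \<open>finite Z\<close>] by blast
  define n where "n = length xs"
  define K where "K = mat n n (\<lambda>(i, j). \<kappa> (xs ! i) (xs ! j))"
  have "invertible_mat K" using nd xs \<open>Z \<subseteq> S\<close> unfolding nondegenerate_kernel_def K_def n_def by auto
  then obtain B where B: "\<And>k j. k < n \<Longrightarrow> j < n \<Longrightarrow> (\<Sum>i<n. B k i * K $$ (i, j)) = (if k = j then 1 else 0)"
    using invertible_mat_left_inverse[of K n] unfolding K_def by auto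
  have K: "K $$ (i, j) = \<kappa> (xs ! i) (xs ! j)" if "i < n" "j < n" for i j
    using that unfolding K_def by simp
  define idx where "idx z = (THE i. i < n \<and> xs ! i = z)" for z
  have idx: "idx (xs ! i) = i" if "i < n" for i
    unfolding idx_def using that xs(1) n_def by (auto intro!: the_equality simp: nth_eq_iff_index_eq)
  have reindex: "(\<Sum>z\<in>Z. F z) = (\<Sum>i<n. F (xs ! i))" for F :: "'a \<Rightarrow> real"
  proof -
    have "inj_on (nth xs) {..<n}" using xs(1) n_def by (simp add: inj_on_nth)
    moreover have "nth xs ` {..<n} = Z" using xs(2) n_def by (auto simp: set_conv_nth)
    ultimately show ?thesis by (metis sum.reindex comp_apply sum.cong)
  qed
  define w where "w z = (\<Sum>k<n. \<kappa> r (xs ! k) * B k (idx z))" for z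
  show ?thesis
  proof (intro exI ballI)
    fix z assume "z \<in> Z"
    then obtain j where j: "j < n" "z = xs ! j" using xs(2) n_def by (auto simp: set_conv_nth)
    have "(\<Sum>z'\<in>Z. w z' * \<kappa> z' z) = (\<Sum>i<n. \<Sum>k<n. \<kappa> r (xs ! k) * B k i * K $$ (i, j))"
      unfolding reindex j(2) by (intro sum.cong refl) (simp add: w_def idx K j sum_distrib_right)
    also have "\<dots> = (\<Sum>k<n. \<kappa> r (xs ! k) * (\<Sum>i<n. B k i * K $$ (i, j)))"
      by (subst sum.swap) (simp add: sum_distrib_left mult.assoc)
    also have "\<dots> = \<kappa> r z"
      using j by (simp add: B if_distrib cong: if_cong)
    finally show "(\<Sum>z'\<in>Z. w z' * \<kappa> z' z) = \<kappa> r z" .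
  qed
qed

lemma (in prob_space) kriging_residual_uncorrelated:
  fixes g :: "'x \<times> 'd \<Rightarrow> 'a \<Rightarrow> real"
  assumes gp: "zero_mean_GP M (UNIV \<times> J) g (\<lambda>(r, d) (r', d'). \<kappa> r r' * \<alpha> d d')"
    and "d\<^sub>0 \<in> J" "j \<in> J" "finite Z" "z \<in> Z"
    and weights: "(\<Sum>z'\<in>Z. w z' * \<kappa> z' z) = \<kappa> r z"
  shows "expectation (\<lambda>\<omega>. (g (r, d\<^sub>0) \<omega> - (\<Sum>z'\<in>Z. w z' * g (z', d\<^sub>0) \<omega>)) * g (z, j) \<omega>) = 0"
proof -
  have "centered_gaussian_process M (UNIV \<times> J) g"
    using gp by (simp add: zero_mean_GP_def centered_gaussian_process_def)
  note moments = centered_gaussian_process_lin_comb[OF this is_lin_comb_component]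
  have integrable: "integrable M (\<lambda>\<omega>. g (a, d\<^sub>0) \<omega> * g (z, j) \<omega>)" for a
    using moments[of "(a, d\<^sub>0)"] moments[of "(z, j)"] assms(2,3)
    by (intro integrable_mult_of_square_integrable) auto
  have cov: "expectation (\<lambda>\<omega>. g (a, d\<^sub>0) \<omega> * g (z, j) \<omega>) = \<kappa> a z * \<alpha> d\<^sub>0 j" for a
    using gp assms(2,3) unfolding zero_mean_GP_def by auto
  have "expectation (\<lambda>\<omega>. (g (r, d\<^sub>0) \<omega> - (\<Sum>z'\<in>Z. w z' * g (z', d\<^sub>0) \<omega>)) * g (z, j) \<omega>) =
      expectation (\<lambda>\<omega>. g (r, d\<^sub>0) \<omega> * g (z, j) \<omega> - (\<Sum>z'\<in>Z. w z' * (g (z', d\<^sub>0) \<omega> * g (z, j) \<omega>)))"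
    by (simp add: left_diff_distrib sum_distrib_right mult.assoc)
  also have "\<dots> = \<alpha> d\<^sub>0 j * (\<kappa> r z - (\<Sum>z'\<in>Z. w z' * \<kappa> z' z))"
    using integrable
    by (simp add: Bochner_Integration.integral_diff Bochner_Integration.integral_sum cov
        algebra_simps sum_distrib_left sum_distrib_right)
  also have "\<dots> = 0" using weights by simp
  finally show ?thesis .
qed

lemma (in prob_space) uncorrelated_of_linear_transition:
  fixes \<epsilon> q Y :: "'a \<Rightarrow> real" and X :: "'j \<Rightarrow> 'a \<Rightarrow> real"
  assumes transition: "AE \<omega> in M. Y \<omega> = (\<Sum>j\<in>J. A j * X j \<omega>) + q \<omega>"
    and indep: "indep_var borel q borel \<epsilon>" and "integrable M q" "integrable M \<epsilon>" "expectation \<epsilon> = 0"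
    and [measurable]: "Y \<in> borel_measurable M"
    and integrable: "\<And>j. j \<in> J \<Longrightarrow> integrable M (\<lambda>\<omega>. \<epsilon> \<omega> * X j \<omega>)"
    and uncorrelated: "\<And>j. j \<in> J \<Longrightarrow> expectation (\<lambda>\<omega>. \<epsilon> \<omega> * X j \<omega>) = 0"
  shows "expectation (\<lambda>\<omega>. \<epsilon> \<omega> * Y \<omega>) = 0"
proof -
  have q\<epsilon>: "integrable M (\<lambda>\<omega>. q \<omega> * \<epsilon> \<omega>)" "expectation (\<lambda>\<omega>. q \<omega> * \<epsilon> \<omega>) = 0"
    using indep_var_integrable[OF indep] indep_var_lebesgue_integral[OF indep] assms(3-5) by simp_all
  have [measurable]: "\<epsilon> \<in> borel_measurable M" "q \<in> borel_measurable M"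
    using indep by (auto dest: indep_var_rv1 indep_var_rv2)
  have "expectation (\<lambda>\<omega>. \<epsilon> \<omega> * Y \<omega>) = expectation (\<lambda>\<omega>. (\<Sum>j\<in>J. A j * (\<epsilon> \<omega> * X j \<omega>)) + q \<omega> * \<epsilon> \<omega>)"
  proof (rule integral_cong_AE)
    show "AE \<omega> in M. \<epsilon> \<omega> * Y \<omega> = (\<Sum>j\<in>J. A j * (\<epsilon> \<omega> * X j \<omega>)) + q \<omega> * \<epsilon> \<omega>"
      using transition by eventually_elim (simp add: sum_distrib_left algebra_simps)
    show "(\<lambda>\<omega>. (\<Sum>j\<in>J. A j * (\<epsilon> \<omega> * X j \<omega>)) + q \<omega> * \<epsilon> \<omega>) \<in> borel_measurable M"
      using integrable by (auto intro!: borel_measurable_sum borel_measurable_integrable)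
  qed simp
  also have "\<dots> = 0"
    using integrable uncorrelated q\<epsilon>
    by (simp add: Bochner_Integration.integral_add Bochner_Integration.integral_sum)
  finally show ?thesis .
qed

section \<open>Sums of independent separable Gaussian processes\<close>

locale separable_gp_family = prob_space M for M :: "'w measure" +
  fixes D P :: nat and f :: "nat \<Rightarrow> 'x \<times> real \<times> nat \<Rightarrow> 'w \<Rightarrow> real"
    and \<kappa> :: "nat \<Rightarrow> 'x \<Rightarrow> 'x \<Rightarrow> real" and Z :: "nat \<Rightarrow> 'x set"
  assumes D_pos: "1 \<le> D"
    and indep: "indep_vars (\<lambda>_. PiM (UNIV \<times> UNIV \<times> {1..D}) (\<lambda>_. borel))
      (\<lambda>p \<omega>. restrict (\<lambda>i. f p i \<omega>) (UNIV \<times> UNIV \<times> {1..D})) {1..P}"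
    and gaussian: "\<And>p. p \<in> {1..P} \<Longrightarrow> centered_gaussian_process M (UNIV \<times> UNIV \<times> {1..D}) (f p)"
    and nondegenerate: "\<And>p. p \<in> {1..P} \<Longrightarrow> nondegenerate_kernel UNIV (\<kappa> p)"
    and separable: "\<And>p \<tau>. p \<in> {1..P} \<Longrightarrow> \<exists>\<alpha>.
      zero_mean_GP M (UNIV \<times> {1..D}) (\<lambda>(r, d). f p (r, \<tau>, d)) (\<lambda>(r, d) (r', d'). \<kappa> p r r' * \<alpha> d d')"
    and transition: "\<And>p \<tau> \<tau>'. p \<in> {1..P} \<Longrightarrow> \<exists>(A :: nat \<Rightarrow> nat \<Rightarrow> real) (q :: 'x \<times> nat \<Rightarrow> 'w \<Rightarrow> real).
      jointly_gaussian M (UNIV \<times> {1..D}) q \<and>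
      indep_var (PiM (UNIV \<times> {1..D}) (\<lambda>_. borel)) (\<lambda>\<omega>. restrict (\<lambda>i. q i \<omega>) (UNIV \<times> {1..D}))
        (PiM (UNIV \<times> {1..D}) (\<lambda>_. borel)) (\<lambda>\<omega>. restrict (\<lambda>(r, d). f p (r, \<tau>, d) \<omega>) (UNIV \<times> {1..D})) \<and>
      (\<forall>r. \<forall>d\<in>{1..D}. AE \<omega> in M. f p (r, \<tau>', d) \<omega> = (\<Sum>j=1..D. A d j * f p (r, \<tau>, j) \<omega>) + q (r, d) \<omega>)"
    and finite_Z: "\<And>p. p \<in> {1..P} \<Longrightarrow> finite (Z p)"
begin

definition kriging_weight :: "nat \<Rightarrow> 'x \<Rightarrow> 'x \<Rightarrow> real" where
  "kriging_weight p r = (SOME w. \<forall>z\<in>Z p. (\<Sum>z'\<in>Z p. w z' * \<kappa> p z' z) = \<kappa> p r z)"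

lemma kriging_weight:
  assumes "p \<in> {1..P}" "z \<in> Z p"
  shows "(\<Sum>z'\<in>Z p. kriging_weight p r z' * \<kappa> p z' z) = \<kappa> p r z"
  using someI_ex[OF nondegenerate_kernel_interpolation[OF nondegenerate finite_Z]] assms
  unfolding kriging_weight_def by blast

definition residual :: "real \<Rightarrow> nat \<Rightarrow> 'x \<Rightarrow> 'w \<Rightarrow> real" where
  "residual \<tau> p r \<omega> = f p (r, \<tau>, 1) \<omega> - (\<Sum>z\<in>Z p. kriging_weight p r z * f p (z, \<tau>, 1) \<omega>)"

lemma residual_lin_comb:
  assumes "p \<in> {1..P}"
  shows "is_lin_comb (f p) (UNIV \<times> UNIV \<times> {1..D}) (residual \<tau> p r)"
  unfolding residual_def[abs_def] using assms D_pos finite_Z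
  by (intro is_lin_comb_diff is_lin_comb_sum is_lin_comb_cmult is_lin_comb_component) auto

lemma residual_uncorrelated:
  assumes p: "p \<in> {1..P}" and z: "z \<in> Z p" and d: "d \<in> {1..D}"
  shows "expectation (\<lambda>\<omega>. residual \<tau> p r \<omega> * f p (z, \<tau>', d) \<omega>) = 0"
proof -
  obtain A and q :: "'x \<times> nat \<Rightarrow> 'w \<Rightarrow> real" where q: "jointly_gaussian M (UNIV \<times> {1..D}) q"
    and q_indep: "indep_var (PiM (UNIV \<times> {1..D}) (\<lambda>_. borel)) (\<lambda>\<omega>. restrict (\<lambda>i. q i \<omega>) (UNIV \<times> {1..D}))
      (PiM (UNIV \<times> {1..D}) (\<lambda>_. borel)) (\<lambda>\<omega>. restrict (\<lambda>(r, d). f p (r, \<tau>, d) \<omega>) (UNIV \<times> {1..D}))"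
    and step: "AE \<omega> in M. f p (z, \<tau>', d) \<omega> = (\<Sum>j=1..D. A d j * f p (z, \<tau>, j) \<omega>) + q (z, d) \<omega>"
    using transition[OF p, of \<tau> \<tau>'] d by blast
  obtain \<alpha> where gp: "zero_mean_GP M (UNIV \<times> {1..D}) (\<lambda>(r, d). f p (r, \<tau>, d)) (\<lambda>(r, d) (r', d'). \<kappa> p r r' * \<alpha> d d')"
    using separable[OF p] by blast
  note moments = centered_gaussian_process_lin_comb[OF gaussian[OF p]]
  note residual_moments = moments[OF residual_lin_comb[OF p]]
  have component: "is_lin_comb (f p) (UNIV \<times> UNIV \<times> {1..D}) (f p (x, t, j))" if "j \<in> {1..D}" for x t j
    using that by (intro is_lin_comb_component) auto
  have "indep_var borel ((\<lambda>v. v (z, d)) \<circ> (\<lambda>\<omega>. restrict (\<lambda>i. q i \<omega>) (UNIV \<times> {1..D}))) borel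
      ((\<lambda>v. v (r, 1) - (\<Sum>z'\<in>Z p. kriging_weight p r z' * v (z', 1))) \<circ>
        (\<lambda>\<omega>. restrict (\<lambda>(r, d). f p (r, \<tau>, d) \<omega>) (UNIV \<times> {1..D})))"
    using d D_pos
    by (intro indep_var_compose[OF q_indep])
      (auto intro!: borel_measurable_diff borel_measurable_sum borel_measurable_times measurable_component_singleton)
  then have "indep_var borel (q (z, d)) borel (residual \<tau> p r)"
    using d D_pos by (simp add: comp_def residual_def[abs_def])
  then show ?thesis
  proof (rule uncorrelated_of_linear_transition[OF step])
    show "integrable M (q (z, d))"
      using d by (intro gaussian_rv_integrable gaussian_rv_lin_comb[OF q] is_lin_comb_component) auto
    show "integrable M (\<lambda>\<omega>. residual \<tau> p r \<omega> * f p (z, \<tau>, j) \<omega>)" if "j \<in> {1..D}" for j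
      using residual_moments moments[OF component[OF that]]
      by (intro integrable_mult_of_square_integrable) auto
    show "expectation (\<lambda>\<omega>. residual \<tau> p r \<omega> * f p (z, \<tau>, j) \<omega>) = 0" if "j \<in> {1..D}" for j
      using kriging_residual_uncorrelated[OF gp _ that finite_Z[OF p] z kriging_weight[OF p z]] D_pos
      by (simp add: residual_def)
  qed (use residual_moments moments(1)[OF component[OF d]] in auto)
qed

lemma residuals_indep_values:
  assumes "finite X" "finite T"
  defines "U \<equiv> SIGMA p:{1..P}. Z p \<times> T \<times> {1..D}"
  shows "distr M (PiM X (\<lambda>_. borel) \<Otimes>\<^sub>M PiM U (\<lambda>_. borel))
      (\<lambda>\<omega>. (restrict (\<lambda>r. \<Sum>p\<in>{1..P}. residual \<tau> p r \<omega>) X, restrict (\<lambda>(p, i). f p i \<omega>) U)) =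
    distr M (PiM X (\<lambda>_. borel)) (\<lambda>\<omega>. restrict (\<lambda>r. \<Sum>p\<in>{1..P}. residual \<tau> p r \<omega>) X) \<Otimes>\<^sub>M
    distr M (PiM U (\<lambda>_. borel)) (\<lambda>\<omega>. restrict (\<lambda>(p, i). f p i \<omega>) U)"
proof -
  define y where "y p j \<omega> = (if fst j = p then f p (snd j) \<omega> else 0)" for p j \<omega>
  have "finite U" unfolding U_def using assms(2) finite_Z by (auto intro!: finite_SigmaI)
  have y: "is_lin_comb (f p) (UNIV \<times> UNIV \<times> {1..D}) (y p j)" if "j \<in> U" for p j
  proof (cases "fst j = p")
    case True
    then have "y p j = f p (snd j)" by (simp add: y_def fun_eq_iff)
    then show ?thesis using that by (auto simp: U_def intro: is_lin_comb_component)
  next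
    case False
    then have "y p j = (\<lambda>_. 0)" by (simp add: y_def fun_eq_iff)
    then show ?thesis by (simp add: is_lin_comb_zero)
  qed
  have uncorrelated: "expectation (\<lambda>\<omega>. residual \<tau> p r \<omega> * y p j \<omega>) = 0" if "p \<in> {1..P}" "j \<in> U" for p r j
  proof (cases "fst j = p")
    case True
    then show ?thesis using that residual_uncorrelated by (auto simp: y_def U_def)
  qed (simp add: y_def)
  have "distr M (PiM X (\<lambda>_. borel) \<Otimes>\<^sub>M PiM U (\<lambda>_. borel))
      (\<lambda>\<omega>. (restrict (\<lambda>r. \<Sum>p\<in>{1..P}. residual \<tau> p r \<omega>) X, restrict (\<lambda>j. \<Sum>p\<in>{1..P}. y p j \<omega>) U)) =
    distr M (PiM X (\<lambda>_. borel)) (\<lambda>\<omega>. restrict (\<lambda>r. \<Sum>p\<in>{1..P}. residual \<tau> p r \<omega>) X) \<Otimes>\<^sub>M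
    distr M (PiM U (\<lambda>_. borel)) (\<lambda>\<omega>. restrict (\<lambda>j. \<Sum>p\<in>{1..P}. y p j \<omega>) U)"
    by (rule indep_uncorrelated_gaussian_sums[where x="\<lambda>p. residual \<tau> p" and y=y,
          OF assms(1) \<open>finite U\<close> indep gaussian]) (use residual_lin_comb y uncorrelated in blast)+
  moreover have "restrict (\<lambda>j. \<Sum>p\<in>{1..P}. y p j \<omega>) U = restrict (\<lambda>(p, i). f p i \<omega>) U" for \<omega>
    by (auto simp: y_def U_def sum.delta' fun_eq_iff)
  ultimately show ?thesis by simp
qed

lemma cond_indep_at_time:
  assumes "\<tau> \<in> T" "finite T" "finite X"
  shows "cond_indep M
    (gen_sigma M X (\<lambda>r \<omega>. \<Sum>p\<in>{1..P}. f p (r, \<tau>, 1) \<omega>))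
    (gen_sigma M {(p, r, \<tau>', d). p \<in> {1..P} \<and> r \<in> Z p \<and> \<tau>' \<in> T \<and> d \<in> {1..D} \<and> \<not> (\<tau>' = \<tau> \<and> d = 1)}
      (\<lambda>(p, i) \<omega>. f p i \<omega>))
    (gen_sigma M {(p, r). p \<in> {1..P} \<and> r \<in> Z p} (\<lambda>(p, r) \<omega>. f p (r, \<tau>, 1) \<omega>))"
proof -
  define U where "U = (SIGMA p:{1..P}. Z p \<times> T \<times> {1..D})"
  define U\<^sub>\<tau> where "U\<^sub>\<tau> = {(p, r). p \<in> {1..P} \<and> r \<in> Z p}"
  define V where "V = {(p, r, \<tau>', d). p \<in> {1..P} \<and> r \<in> Z p \<and> \<tau>' \<in> T \<and> d \<in> {1..D} \<and> \<not> (\<tau>' = \<tau> \<and> d = 1)}"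
  define E where "E \<omega> = restrict (\<lambda>r. \<Sum>p\<in>{1..P}. residual \<tau> p r \<omega>) X" for \<omega>
  define W where "W \<omega> = restrict (\<lambda>(p, i). f p i \<omega>) U" for \<omega>
  define g where "g v = restrict (\<lambda>(p, r). v (p, r, \<tau>, 1)) U\<^sub>\<tau>" for v :: "nat \<times> 'x \<times> real \<times> nat \<Rightarrow> real"
  define h where "h v = restrict v V" for v :: "nat \<times> 'x \<times> real \<times> nat \<Rightarrow> real"
  define \<Phi> where "\<Phi> e u = restrict (\<lambda>r. e r + (\<Sum>p\<in>{1..P}. \<Sum>z\<in>Z p. kriging_weight p r z * u (p, z))) X"
    for e :: "'x \<Rightarrow> real" and u :: "nat \<times> 'x \<Rightarrow> real"
  have U\<^sub>\<tau>_U: "(p, r, \<tau>, 1) \<in> U" if "(p, r) \<in> U\<^sub>\<tau>" for p r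
    using that \<open>\<tau> \<in> T\<close> D_pos by (auto simp: U_def U\<^sub>\<tau>_def)
  have V_U: "V \<subseteq> U" by (auto simp: U_def V_def)
  have [measurable]: "f p i \<in> borel_measurable M" if "(p, i) \<in> U" for p i
    using that centered_gaussian_process_lin_comb(1)[OF gaussian is_lin_comb_component] by (auto simp: U_def)
  have [measurable]: "residual \<tau> p r \<in> borel_measurable M" if "p \<in> {1..P}" for p r
    using centered_gaussian_process_lin_comb(1)[OF gaussian residual_lin_comb] that by blast
  have E: "E \<in> measurable M (PiM X (\<lambda>_. borel))" and W: "W \<in> measurable M (PiM U (\<lambda>_. borel))"
    unfolding E_def W_def by (auto intro!: measurable_restrict borel_measurable_sum)
  have g: "g \<in> measurable (PiM U (\<lambda>_. borel)) (PiM U\<^sub>\<tau> (\<lambda>_. borel))"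
    and h: "h \<in> measurable (PiM U (\<lambda>_. borel)) (PiM V (\<lambda>_. borel))"
    unfolding g_def h_def using U\<^sub>\<tau>_U V_U
    by (auto intro!: measurable_restrict measurable_component_singleton)
  have \<Phi>: "(\<lambda>x. \<Phi> (fst x) (snd x)) \<in> measurable (PiM X (\<lambda>_. borel) \<Otimes>\<^sub>M PiM U\<^sub>\<tau> (\<lambda>_. borel)) (PiM X (\<lambda>_. borel))"
    unfolding \<Phi>_def
    by (auto intro!: measurable_restrict borel_measurable_add borel_measurable_sum borel_measurable_times
        measurable_component_singleton[THEN measurable_compose[OF measurable_fst]]
        measurable_component_singleton[THEN measurable_compose[OF measurable_snd]] simp: U\<^sub>\<tau>_def)
  have "distr M (PiM X (\<lambda>_. borel) \<Otimes>\<^sub>M PiM U (\<lambda>_. borel)) (\<lambda>\<omega>. (E \<omega>, W \<omega>)) =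
      distr M (PiM X (\<lambda>_. borel)) E \<Otimes>\<^sub>M distr M (PiM U (\<lambda>_. borel)) W"
    using residuals_indep_values[OF assms(3,2), of \<tau>] unfolding E_def W_def U_def .
  from cond_indep_of_indep_noise[OF E W g h \<Phi> this]
  have "cond_indep M (vimage_algebra (space M) (\<lambda>\<omega>. \<Phi> (E \<omega>) (g (W \<omega>))) (PiM X (\<lambda>_. borel)))
      (vimage_algebra (space M) (\<lambda>\<omega>. h (W \<omega>)) (PiM V (\<lambda>_. borel)))
      (vimage_algebra (space M) (\<lambda>\<omega>. g (W \<omega>)) (PiM U\<^sub>\<tau> (\<lambda>_. borel)))" .
  moreover have "\<Phi> (E \<omega>) (g (W \<omega>)) = restrict (\<lambda>r. \<Sum>p\<in>{1..P}. f p (r, \<tau>, 1) \<omega>) X" for \<omega>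
    using U\<^sub>\<tau>_U
    by (auto simp: \<Phi>_def E_def g_def W_def U\<^sub>\<tau>_def residual_def sum_subtractf fun_eq_iff intro!: sum.cong)
  moreover have "h (W \<omega>) = restrict (\<lambda>j. (\<lambda>(p, i) \<omega>. f p i \<omega>) j \<omega>) V"
    "g (W \<omega>) = restrict (\<lambda>j. (\<lambda>(p, r) \<omega>. f p (r, \<tau>, 1) \<omega>) j \<omega>) U\<^sub>\<tau>" for \<omega>
    using V_U U\<^sub>\<tau>_U by (auto simp: h_def g_def W_def fun_eq_iff)
  ultimately show ?thesis by (simp add: gen_sigma_def V_def U\<^sub>\<tau>_def)
qed

end

theorem theorem2:
  fixes M :: "'w measure"
    and D P :: nat
    and f :: "nat \<Rightarrow> 'x \<times> real \<times> nat \<Rightarrow> 'w \<Rightarrow> real"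
    and T :: "real set"
    and Z :: "nat \<Rightarrow> 'x set"
    and Xs :: "real \<Rightarrow> 'x set"
  assumes "prob_space M"
    and "D \<ge> 1" and "P \<ge> 1"
    and indep: "prob_space.indep_vars M (\<lambda>_. PiM (UNIV \<times> UNIV \<times> {1..D}) (\<lambda>_. borel))
                  (\<lambda>p \<omega>. restrict (\<lambda>i. f p i \<omega>) (UNIV \<times> UNIV \<times> {1..D})) {1..P}"
    and GP: "\<forall>p\<in>{1..P}. jointly_gaussian M (UNIV \<times> UNIV \<times> {1..D}) (f p) \<and>
                (\<forall>i\<in>UNIV \<times> UNIV \<times> {1..D}. integral\<^sup>L M (f p i) = 0)"
    and sep: "\<forall>p\<in>{1..P}. \<exists>\<kappa> :: 'x \<Rightarrow> 'x \<Rightarrow> real.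
                is_kernel UNIV \<kappa> \<and> nondegenerate_kernel UNIV \<kappa> \<and>
                (\<forall>\<tau>. \<exists>\<alpha> :: nat \<Rightarrow> nat \<Rightarrow> real. is_kernel {1..D} \<alpha> \<and>
                   zero_mean_GP M (UNIV \<times> {1..D}) (\<lambda>(r, d). f p (r, \<tau>, d))
                     (\<lambda>(r, d) (r', d'). \<kappa> r r' * \<alpha> d d'))"
    and trans: "\<forall>p\<in>{1..P}. \<forall>\<tau> \<tau>'. \<exists>(A :: nat \<Rightarrow> nat \<Rightarrow> real) (q :: 'x \<times> nat \<Rightarrow> 'w \<Rightarrow> real).
                jointly_gaussian M (UNIV \<times> {1..D}) q \<and>
                prob_space.indep_var M
                  (PiM (UNIV \<times> {1..D}) (\<lambda>_. borel)) (\<lambda>\<omega>. restrict (\<lambda>i. q i \<omega>) (UNIV \<times> {1..D}))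
                  (PiM (UNIV \<times> {1..D}) (\<lambda>_. borel))
                  (\<lambda>\<omega>. restrict (\<lambda>(r, d). f p (r, \<tau>, d) \<omega>) (UNIV \<times> {1..D})) \<and>
                (\<forall>r. \<forall>d\<in>{1..D}. AE \<omega> in M.
                   f p (r, \<tau>', d) \<omega> = (\<Sum>j=1..D. A d j * f p (r, \<tau>, j) \<omega>) + q (r, d) \<omega>)"
    and nondeg: "\<forall>p\<in>{1..P}. nondegenerate_kernel (UNIV \<times> UNIV \<times> {1..D}) (cov_kernel M (f p))"
    and "finite T"
    and "\<forall>p\<in>{1..P}. finite (Z p)"
    and "\<forall>\<tau>\<in>T. finite (Xs \<tau>)"
  shows "\<forall>\<tau>\<in>T. cond_indep M
           (gen_sigma M (Xs \<tau>) (\<lambda>r \<omega>. \<Sum>p\<in>{1..P}. f p (r, \<tau>, 1) \<omega>))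
           (gen_sigma M {(p, r, \<tau>', d). p \<in> {1..P} \<and> r \<in> Z p \<and> \<tau>' \<in> T \<and> d \<in> {1..D} \<and>
                                     \<not> (\<tau>' = \<tau> \<and> d = 1)}
              (\<lambda>(p, i) \<omega>. f p i \<omega>))
           (gen_sigma M {(p, r). p \<in> {1..P} \<and> r \<in> Z p} (\<lambda>(p, r) \<omega>. f p (r, \<tau>, 1) \<omega>))"
proof -
  obtain \<kappa> where \<kappa>: "\<forall>p\<in>{1..P}. is_kernel UNIV (\<kappa> p) \<and> nondegenerate_kernel UNIV (\<kappa> p) \<and>
      (\<forall>\<tau>. \<exists>\<alpha>. is_kernel {1..D} \<alpha> \<and> zero_mean_GP M (UNIV \<times> {1..D}) (\<lambda>(r, d). f p (r, \<tau>, d))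
        (\<lambda>(r, d) (r', d'). \<kappa> p r r' * \<alpha> d d'))"
    using bchoice[OF sep] by (elim exE) (rule that)
  interpret separable_gp_family M D P f \<kappa> Z
  proof (intro separable_gp_family.intro[OF assms(1)] separable_gp_family_axioms.intro)
    show "1 \<le> D" by fact
    show "centered_gaussian_process M (UNIV \<times> UNIV \<times> {1..D}) (f p)" if "p \<in> {1..P}" for p
      using GP that unfolding centered_gaussian_process_def by blast
    show "nondegenerate_kernel UNIV (\<kappa> p)" if "p \<in> {1..P}" for p
      using \<kappa> that by blast
    show "\<exists>\<alpha>. zero_mean_GP M (UNIV \<times> {1..D}) (\<lambda>(r, d). f p (r, \<tau>, d)) (\<lambda>(r, d) (r', d'). \<kappa> p r r' * \<alpha> d d')"
      if "p \<in> {1..P}" for p \<tau>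
      using \<kappa> that by blast
    show "finite (Z p)" if "p \<in> {1..P}" for p
      using assms(10) that by blast
  qed (fact indep, use trans in blast)
  show ?thesis
    using assms(9,11) by (blast intro: cond_indep_at_time)
qed

end
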